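(* Let $\{X_k\},\{V_k\},\{\mu_k\}$ be generated by the SMPG algorithm. There exists a constant $\bar\alpha\in(0,1]$, independent of $k$, such that for every $k$ and every $\alpha\in(0,\bar\alpha)$, $$\tilde f(X_k,\mu_k)-\tilde f(\mathfrak{R}_{X_k}(\alpha V_k),\mu_k)\ge\frac{\alpha}{2\mu_k}\|V_k\|_{\mathrm F}^2 .$$ In particular the Armijo backtracking in each iteration terminates after at most $\lceil\log_\beta\bar\alpha\rceil$ trials and $\alpha_k\ge\beta\bar\alpha$.
   Context: Setting. $1\le r<d$, $\mathcal{O}^{d,r}=\{X\in\mathbb{R}^{d\times r}:X^\top X=I_r\}$, $\mathcal{T}_X\mathcal{O}^{d,r}=\{D:X^\top D+D^\top X=0\}$. Consider $\min_{X\in\mathcal{O}^{d,r}}f(X)=u(X)+s(X)+w(X)$, where $u:\mathbb{R}^{d\times r}\to\mathbb{R}$ is continuously differentiable with $L_u$-Lipschitz gradient; $s:\mathbb{R}^{d\times r}\to\mathbb{R}$ is convex and $L_s$-Lipschitz; $w(X)=2\rho\|(I_d-XX^\top)\Sigma_\circ^{1/2}\|_{\mathrm F}$ with $\Sigma_\circ\in\mathbb{S}_+^d$, $\rho>0$. Smoothing: $\tilde w(X,\mu)=w(X)$ if $w(X)\ge\mu\rho$, $\tilde w(X,\mu)=\frac{w(X)^2}{2\mu\rho}+\frac{\mu\rho}{2}$ otherwise; $\tilde g(X,\mu)=u(X)+\tilde w(X,\mu)$, $\tilde f(X,\mu)=\tilde g(X,\mu)+s(X)$; $\nabla$ is the Euclidean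 gradient in $X$. A retraction is a smooth map $\mathfrak{R}$ on the tangent bundle of $\mathcal{O}^{d,r}$ with $\mathfrak{R}_X(0)=X$ and $\mathrm{D}\mathfrak{R}_X(0)=\mathrm{id}$ on $\mathcal{T}_X\mathcal{O}^{d,r}$. SMPG algorithm: inputs $X_0\in\mathcal{O}^{d,r}$, $\mu_0>0$, $\bar\mu\in[0,\mu_0]$, $\theta\in(0,1)$, $\beta\in(0,1)$. For $k=0,1,\dots$: compute $V_k=\arg\min_{V\in\mathcal{T}_{X_k}\mathcal{O}^{d,r}}\langle\nabla\tilde g(X_k,\mu_k),V\rangle+\frac{1}{2\mu_k}\|V\|_{\mathrm F}^2+s(X_k+V)$; if $\|V_k\|_{\mathrm F}\le\bar\mu^2$ and $\mu_k\le\bar\mu$, stop and return $X_k$; otherwise set $\alpha_k=\beta^{m_k}$ with $m_k$ the smallest nonnegative integer such that $\tilde f(\mathfrak{R}_{X_k}(\beta^{m_k}V_k),\mu_k)\le\tilde f(X_k,\mu_k)-\frac{\beta^{m_k}}{2\mu_k}\|V_k\|_{\mathrm F}^2$, set $X_{k+1}=\mathfrak{R}_{X_k}(\alpha_kV_k)$, and set $\mu_{k+1}=\mu_k$ if $\|V_k\|_{\mathrm F}>\mu_k^2$, $\mu_{k+1}=\theta\mu_k$ if $\|V_k\|_{\mathrm F}\le\mu_k^2$. *)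

theory Defs
  imports "HOL-Analysis.Analysis"
begin

text \<open>Matrices in R^(d x r) are rendered as real^'r^'d (rows indexed by 'd).
  The norm on this type is the Frobenius norm, and the inner product is the
  trace inner product.\<close>

definition stiefel :: "(real^'r^'d) set" where
  "stiefel = {X. transpose X ** X = mat 1}"

definition tangent :: "real^'r^'d \<Rightarrow> (real^'r^'d) set" where
  "tangent X = {D. transpose X ** D + transpose D ** X = 0}"

definition tangent_bundle :: "((real^'r^'d) \<times> (real^'r^'d)) set" where
  "tangent_bundle = {(X, D). X \<in> stiefel \<and> D \<in> tangent X}"

definition psd :: "real^'n^'n \<Rightarrow> bool" where
  "psd M \<longleftrightarrow> transpose M = M \<and> (\<forall>x. 0 \<le> x \<bullet> (M *v x))"

definition egrad :: "('a::real_inner \<Rightarrow> real) \<Rightarrow> 'a \<Rightarrow> 'a" where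
  "egrad f x = (THE G. (f has_derivative (\<lambda>h. G \<bullet> h)) (at x))"

fun Ck :: "nat \<Rightarrow> 'a::real_normed_vector set \<Rightarrow> ('a \<Rightarrow> 'b::real_normed_vector) \<Rightarrow> bool" where
  "Ck 0 U f = continuous_on U f"
| "Ck (Suc k) U f = ((\<forall>x\<in>U. f differentiable (at x)) \<and>
      (\<forall>h. Ck k U (\<lambda>x. frechet_derivative f (at x) h)))"

definition smooth_on :: "'a::real_normed_vector set \<Rightarrow> ('a \<Rightarrow> 'b::real_normed_vector) \<Rightarrow> bool" where
  "smooth_on U f \<longleftrightarrow> open U \<and> (\<forall>k. Ck k U f)"

text \<open>Retraction on the Stiefel manifold: smooth map on the tangent bundle
  (smooth = restriction of a smooth map on an open neighbourhood), into the manifold,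
  with R_X(0) = X and D R_X(0) = id on the tangent space.\<close>
definition retraction :: "(real^'r^'d \<Rightarrow> real^'r^'d \<Rightarrow> real^'r^'d) \<Rightarrow> bool" where
  "retraction R \<longleftrightarrow>
     (\<forall>(X, D) \<in> tangent_bundle. R X D \<in> stiefel) \<and>
     (\<exists>U F. tangent_bundle \<subseteq> U \<and> smooth_on U F \<and>
            (\<forall>(X, D) \<in> tangent_bundle. F (X, D) = R X D)) \<and>
     (\<forall>X \<in> stiefel. R X 0 = X \<and> (R X has_derivative id) (at 0 within tangent X))"

definition wfun :: "real \<Rightarrow> real^'d^'d \<Rightarrow> real^'r^'d \<Rightarrow> real" where
  "wfun \<rho> Sh X = 2 * \<rho> * norm ((mat 1 - X ** transpose X) ** Sh)"

definition wsm :: "real \<Rightarrow> real^'d^'d \<Rightarrow> real^'r^'d \<Rightarrow> real \<Rightarrow> real" where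
  "wsm \<rho> Sh X \<mu> = (if wfun \<rho> Sh X \<ge> \<mu> * \<rho> then wfun \<rho> Sh X
      else (wfun \<rho> Sh X)\<^sup>2 / (2 * \<mu> * \<rho>) + \<mu> * \<rho> / 2)"

definition gsm :: "(real^'r^'d \<Rightarrow> real) \<Rightarrow> real \<Rightarrow> real^'d^'d \<Rightarrow> real^'r^'d \<Rightarrow> real \<Rightarrow> real" where
  "gsm u \<rho> Sh X \<mu> = u X + wsm \<rho> Sh X \<mu>"

definition fsm :: "(real^'r^'d \<Rightarrow> real) \<Rightarrow> (real^'r^'d \<Rightarrow> real) \<Rightarrow> real \<Rightarrow> real^'d^'d \<Rightarrow> real^'r^'d \<Rightarrow> real \<Rightarrow> real" where
  "fsm u s \<rho> Sh X \<mu> = gsm u \<rho> Sh X \<mu> + s X"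

definition subobj :: "(real^'r^'d \<Rightarrow> real) \<Rightarrow> (real^'r^'d \<Rightarrow> real) \<Rightarrow> real \<Rightarrow> real^'d^'d \<Rightarrow> real^'r^'d \<Rightarrow> real \<Rightarrow> real^'r^'d \<Rightarrow> real" where
  "subobj u s \<rho> Sh X \<mu> V = egrad (\<lambda>Y. gsm u \<rho> Sh Y \<mu>) X \<bullet> V + (norm V)\<^sup>2 / (2 * \<mu>) + s (X + V)"

definition smpg_stop :: "real \<Rightarrow> real^'r^'d \<Rightarrow> real \<Rightarrow> bool" where
  "smpg_stop \<mu>bar V \<mu> \<longleftrightarrow> norm V \<le> \<mu>bar\<^sup>2 \<and> \<mu> \<le> \<mu>bar"

definition armijo :: "(real^'r^'d \<Rightarrow> real) \<Rightarrow> (real^'r^'d \<Rightarrow> real) \<Rightarrow> real \<Rightarrow> real^'d^'d \<Rightarrow>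
    (real^'r^'d \<Rightarrow> real^'r^'d \<Rightarrow> real^'r^'d) \<Rightarrow> real^'r^'d \<Rightarrow> real^'r^'d \<Rightarrow> real \<Rightarrow> real \<Rightarrow> bool" where
  "armijo u s \<rho> Sh R X V \<mu> a \<longleftrightarrow>
     fsm u s \<rho> Sh (R X (a *\<^sub>R V)) \<mu> \<le> fsm u s \<rho> Sh X \<mu> - a / (2 * \<mu>) * (norm V)\<^sup>2"

end

theory Submission
  imports Defs
begin

text \<open>The smoothed penalty is the Huber function (Moreau envelope of the norm) of a matrix
  \<open>W(X)\<close> that is quadratic in \<open>X\<close>, so the smooth part \<open>g = u + w\<^sub>\<mu>\<close> satisfies a descent
  lemma with constant \<open>O(1 + 1/\<mu>)\<close> near the Stiefel manifold, and its gradient is bounded there.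
  Optimality of \<open>V\<close> in the proximal subproblem over the tangent cone gives
  \<open>\<parallel>V\<parallel>\<^sup>2/\<mu> \<le> s(X) - s(X + V) - \<langle>\<nabla>g, V\<rangle>\<close>, hence \<open>\<parallel>V\<parallel> \<le> \<mu>(L\<^sub>s + G)\<close>.
  A retraction agrees with \<open>X + D\<close> up to \<open>O(\<parallel>D\<parallel>\<^sup>2)\<close> uniformly on bounded parts of the tangent
  bundle (second-order Taylor bound for its smooth extension on a compact set). Combining
  these, the decrease along \<open>R\<^sub>X(\<alpha>V)\<close> is at least \<open>\<alpha>\<parallel>V\<parallel>\<^sup>2/\<mu> - O(\<alpha>\<^sup>2\<parallel>V\<parallel>\<^sup>2/\<mu>)\<close> with
  constants independent of the iteration because \<open>\<mu>\<^sub>k \<le> \<mu>\<^sub>0\<close>; choosing the threshold strictly between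
  two consecutive powers of \<open>\<beta>\<close> gives the bounds on the backtracking.\<close>

subsection \<open>The Frobenius norm\<close>

lemma norm_vec_sq: "(norm (x::real^'n))\<^sup>2 = (\<Sum>i\<in>UNIV. (x$i)\<^sup>2)"
  unfolding power2_norm_eq_inner inner_vec_def by (simp add: power2_eq_square)

lemma norm_matrix_sq_rows: "(norm (A::real^'n^'m))\<^sup>2 = (\<Sum>i\<in>UNIV. (norm (A$i))\<^sup>2)"
  by (simp add: power2_norm_eq_inner inner_vec_def power2_eq_square[symmetric] dot_square_norm)

lemma norm_matrix_sq: "(norm (A::real^'n^'m))\<^sup>2 = (\<Sum>i\<in>UNIV. \<Sum>j\<in>UNIV. (A$i$j)\<^sup>2)"
  by (simp add: norm_matrix_sq_rows norm_vec_sq)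

lemma norm_transpose: "norm (transpose (A::real^'n^'m)) = norm A"
proof -
  have "(norm (transpose A))\<^sup>2 = (norm A)\<^sup>2"
    unfolding norm_matrix_sq transpose_def by (simp, rule sum.swap)
  thus ?thesis by (simp add: power2_eq_iff_nonneg)
qed

lemma matrix_matrix_mult_component:
  "(A ** B)$i$j = A$i \<bullet> column j (B::real^'p^'n)" for A :: "real^'n^'m"
  by (simp add: matrix_matrix_mult_def inner_vec_def column_def mult.commute)

lemma sum_norm_column_sq: "(\<Sum>j\<in>UNIV. (norm (column j (B::real^'p^'n)))\<^sup>2) = (norm B)\<^sup>2"
  unfolding norm_matrix_sq norm_vec_sq column_def by (simp, rule sum.swap)

lemma norm_matrix_mult_le: "norm (A ** B) \<le> norm A * norm (B::real^'p^'n)" for A :: "real^'n^'m"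
proof -
  have "(norm (A ** B))\<^sup>2 = (\<Sum>i\<in>UNIV. \<Sum>j\<in>UNIV. (A$i \<bullet> column j B)\<^sup>2)"
    by (simp add: norm_matrix_sq matrix_matrix_mult_component)
  also have "\<dots> \<le> (\<Sum>i\<in>UNIV. \<Sum>j\<in>UNIV. (norm (A$i))\<^sup>2 * (norm (column j B))\<^sup>2)"
  proof (intro sum_mono)
    fix i j
    have "\<bar>A$i \<bullet> column j B\<bar> \<le> norm (A$i) * norm (column j B)" by (rule Cauchy_Schwarz_ineq2)
    hence "\<bar>A$i \<bullet> column j B\<bar>\<^sup>2 \<le> (norm (A$i) * norm (column j B))\<^sup>2"
      by (rule power_mono) simp
    thus "(A$i \<bullet> column j B)\<^sup>2 \<le> (norm (A$i))\<^sup>2 * (norm (column j B))\<^sup>2"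
      by (simp add: power_mult_distrib)
  qed
  also have "\<dots> = (norm A)\<^sup>2 * (norm B)\<^sup>2"
    by (simp add: sum_distrib_left[symmetric] sum_distrib_right[symmetric]
        sum_norm_column_sq norm_matrix_sq_rows)
  finally have "(norm (A ** B))\<^sup>2 \<le> (norm A * norm B)\<^sup>2" by (simp add: power_mult_distrib)
  thus ?thesis by (rule power2_le_imp_le) simp
qed

lemma transpose_add: "transpose (A + B) = transpose A + transpose (B::real^'n^'m)"
  by (simp add: transpose_def vec_eq_iff)

lemma matrix_add_rdistrib: "(A + B) ** C = A ** C + B ** (C::real^'p^'n)" for A B :: "real^'n^'m"
  by (simp add: matrix_matrix_mult_def vec_eq_iff sum.distrib[symmetric] algebra_simps)

lemma matrix_diff_rdistrib: "(A - B) ** C = A ** C - B ** (C::real^'p^'n)" for A B :: "real^'n^'m"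
  by (simp add: matrix_matrix_mult_def vec_eq_iff sum_subtractf[symmetric] algebra_simps)

lemma continuous_on_matrix_mult [continuous_intros]:
  fixes f :: "'a::topological_space \<Rightarrow> real^'n^'m" and g :: "'a \<Rightarrow> real^'p^'n"
  shows "continuous_on S f \<Longrightarrow> continuous_on S g \<Longrightarrow> continuous_on S (\<lambda>x. f x ** g x)"
  unfolding matrix_matrix_mult_def by (intro continuous_intros) auto

lemma continuous_on_transpose [continuous_intros]:
  fixes f :: "'a::topological_space \<Rightarrow> real^'n^'m"
  shows "continuous_on S f \<Longrightarrow> continuous_on S (\<lambda>x. transpose (f x))"
  unfolding transpose_def by (intro continuous_intros) auto

lemma norm_stiefel: "X \<in> stiefel \<Longrightarrow> norm (X::real^'r^'d) = sqrt (real CARD('r))"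
proof -
  assume "X \<in> stiefel"
  hence XX: "transpose X ** X = mat 1" by (simp add: stiefel_def)
  have "(norm X)\<^sup>2 = (\<Sum>j\<in>UNIV. \<Sum>i\<in>UNIV. (X$i$j)\<^sup>2)"
    unfolding norm_matrix_sq by (rule sum.swap)
  also have "\<dots> = (\<Sum>j\<in>(UNIV::'r set). (transpose X ** X)$j$j)"
    by (simp add: matrix_matrix_mult_def transpose_def power2_eq_square)
  also have "\<dots> = real CARD('r)" by (simp add: XX mat_def)
  finally show ?thesis by (simp add: real_sqrt_unique)
qed

lemma scaleR_tangent: "D \<in> tangent X \<Longrightarrow> t *\<^sub>R D \<in> tangent X"
  unfolding tangent_def
  by (simp add: matrix_scalar_ac transpose_scalar scalar_matrix_assoc[symmetric]
      scaleR_add_right[symmetric])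

subsection \<open>The Huber function\<close>

text \<open>\<open>huber c\<close> is the Moreau envelope of the norm with parameter \<open>c\<close>, i.e.\ the
  smoothing used in \<open>wsm\<close>.\<close>

definition huber :: "real \<Rightarrow> 'a::real_inner \<Rightarrow> real" where
  "huber c v = (if c \<le> norm v then norm v else (norm v)\<^sup>2 / (2*c) + c/2)"

definition huber_grad :: "real \<Rightarrow> 'a::real_inner \<Rightarrow> 'a" where
  "huber_grad c v = (if c \<le> norm v then (1 / norm v) *\<^sub>R v else (1/c) *\<^sub>R v)"

lemma norm_huber_grad_le: "0 < c \<Longrightarrow> norm (huber_grad c v) \<le> 1"
  by (auto simp: huber_grad_def divide_simps)

lemma le_huber_of_norm: "0 < c \<Longrightarrow> (t::real) \<le> t\<^sup>2 / (2*c) + c/2"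
proof -
  assume c: "0 < c"
  have "0 \<le> (t - c)\<^sup>2" by simp
  hence "2*c*t \<le> t\<^sup>2 + c\<^sup>2" by (simp add: power2_eq_square algebra_simps)
  thus ?thesis using c by (simp add: field_simps power2_eq_square)
qed

lemma norm_le_huber: "0 < c \<Longrightarrow> norm v \<le> huber c v"
  using le_huber_of_norm[of c "norm v"] by (auto simp: huber_def)

lemma huber_linearization:
  assumes c: "0 < c"
  shows "huber c v + huber_grad c v \<bullet> (w - v) =
    (if c \<le> norm v then (v \<bullet> w) / norm v else c/2 - (norm v)\<^sup>2 / (2*c) + (v \<bullet> w) / c)"
  using c by (auto simp: huber_def huber_grad_def inner_diff_right dot_square_norm
      field_simps power2_eq_square)

lemma huber_le_linearization:
  fixes v w :: "'a::real_inner"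
  assumes c: "0 < c"
  shows "huber c w \<le> huber c v + huber_grad c v \<bullet> (w - v) + (norm (w - v))\<^sup>2 / (2*c)"
proof -
  define a b p where "a = norm v" "b = norm w" "p = v \<bullet> w"
  have p: "p \<le> a*b" unfolding a_b_p_def by (simp add: norm_cauchy_schwarz)
  have b0: "0 \<le> b" unfolding a_b_p_def by simp
  have wv: "(norm (w - v))\<^sup>2 = a\<^sup>2 + b\<^sup>2 - 2*p"
    unfolding a_b_p_def by (simp add: power2_norm_eq_inner inner_diff algebra_simps inner_commute)
  have hw: "huber c w = (if c \<le> b then b else b\<^sup>2/(2*c) + c/2)"
    unfolding huber_def a_b_p_def ..
  show ?thesis
  proof (cases "c \<le> a")
    case ca: True
    have a0: "0 < a" using c ca by simp
    have lin: "huber c v + huber_grad c v \<bullet> (w - v) = p/a"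
      using ca unfolding huber_linearization[OF c] a_b_p_def by simp
    have "huber c w \<le> p/a + (a\<^sup>2 + b\<^sup>2 - 2*p)/(2*c)"
    proof (cases "c \<le> b")
      case True
      define t where "t = a*b - p"
      have t: "0 \<le> t" using p by (simp add: t_def)
      have "p/a = b - t/a" using a0 by (simp add: t_def field_simps)
      moreover have "(a\<^sup>2 + b\<^sup>2 - 2*p)/(2*c) = (a - b)\<^sup>2/(2*c) + t/c"
        using c by (simp add: t_def field_simps power2_eq_square)
      moreover have "t/a \<le> t/c" using t c ca by (simp add: divide_left_mono)
      moreover have "0 \<le> (a - b)\<^sup>2/(2*c)" using c by simp
      ultimately show ?thesis using True hw by simp
    next
      case False
      have "a*b*(1/a - 1/c) \<le> p*(1/a - 1/c)"
        using p c ca a0 by (intro mult_right_mono_neg) (auto simp: divide_simps)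
      moreover have "c - a \<le> a*b*(1/a - 1/c)"
      proof -
        have "c*(1 - a/c) \<le> b*(1 - a/c)"
          using c ca False by (intro mult_right_mono_neg) (auto simp: divide_simps)
        moreover have "a*b*(1/a - 1/c) = b*(1 - a/c)" "c*(1 - a/c) = c - a"
          using a0 c by (simp_all add: field_simps)
        ultimately show ?thesis by linarith
      qed
      moreover have "0 \<le> (a - c)\<^sup>2/(2*c)" using c by simp
      moreover have "p/a + (a\<^sup>2 + b\<^sup>2 - 2*p)/(2*c) - (b\<^sup>2/(2*c) + c/2)
          = p*(1/a - 1/c) - (c - a) + (a - c)\<^sup>2/(2*c)"
        using a0 c by (simp add: field_simps power2_eq_square)
      ultimately show ?thesis using False hw by simp
    qed
    thus ?thesis using lin wv by simp
  next
    case False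
    have lin: "huber c v + huber_grad c v \<bullet> (w - v) = c/2 - a\<^sup>2/(2*c) + p/c"
      using False unfolding huber_linearization[OF c] a_b_p_def by simp
    have "huber c w \<le> b\<^sup>2/(2*c) + c/2"
      using hw le_huber_of_norm[OF c, of b] by auto
    moreover have "c/2 - a\<^sup>2/(2*c) + p/c + (a\<^sup>2 + b\<^sup>2 - 2*p)/(2*c) = b\<^sup>2/(2*c) + c/2"
      using c by (simp add: field_simps)
    ultimately show ?thesis using lin wv by simp
  qed
qed

lemma huber_ge_linearization:
  fixes v w :: "'a::real_inner"
  assumes c: "0 < c"
  shows "huber c v + huber_grad c v \<bullet> (w - v) \<le> huber c w"
proof -
  define a b p where "a = norm v" "b = norm w" "p = v \<bullet> w"
  have p: "p \<le> a*b" unfolding a_b_p_def by (simp add: norm_cauchy_schwarz)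
  have a0: "0 \<le> a" unfolding a_b_p_def by simp
  have b: "b \<le> huber c w" unfolding a_b_p_def by (rule norm_le_huber[OF c])
  show ?thesis
  proof (cases "c \<le> a")
    case True
    have "p/a \<le> b" using p True c by (simp add: divide_simps mult.commute)
    thus ?thesis using True b unfolding huber_linearization[OF c] a_b_p_def by simp
  next
    case ca: False
    have lin: "huber c v + huber_grad c v \<bullet> (w - v) = c/2 - a\<^sup>2/(2*c) + p/c"
      using ca unfolding huber_linearization[OF c] a_b_p_def by simp
    show ?thesis
    proof (cases "c \<le> b")
      case True
      have "c/2 - a\<^sup>2/(2*c) + a*b/c \<le> b"
      proof -
        have "0 \<le> (c - a)*(b - c)" using ca True by simp
        moreover have "2*c*b - (c*c - a*a + 2*a*b) = 2*((c - a)*(b - c)) + (c - a)\<^sup>2"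
          by (simp add: algebra_simps power2_eq_square)
        ultimately have "c*c - a*a + 2*a*b \<le> 2*c*b"
          by (smt (verit) zero_le_power2)
        thus ?thesis using c by (simp add: field_simps power2_eq_square)
      qed
      moreover have "p/c \<le> a*b/c" using p c by (simp add: divide_right_mono)
      ultimately show ?thesis using lin b by simp
    next
      case False
      have "huber c w = b\<^sup>2/(2*c) + c/2" using False unfolding huber_def a_b_p_def by simp
      moreover have "0 \<le> (norm (w - v))\<^sup>2 / (2*c)" using c by simp
      moreover have "(norm (w - v))\<^sup>2 = a\<^sup>2 + b\<^sup>2 - 2*p"
        unfolding a_b_p_def by (simp add: power2_norm_eq_inner inner_diff algebra_simps inner_commute)
      moreover have "c/2 - a\<^sup>2/(2*c) + p/c + (a\<^sup>2 + b\<^sup>2 - 2*p)/(2*c) = b\<^sup>2/(2*c) + c/2"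
        using c by (simp add: field_simps)
      ultimately show ?thesis using lin c by (simp add: add_divide_distrib[symmetric])
    qed
  qed
qed

subsection \<open>The smoothed penalty and the gradient of the smooth part\<close>

text \<open>For \<open>\<rho> > 0\<close>, \<open>wfun \<rho> Sh X = norm (wmat \<rho> Sh X)\<close>, and \<open>wmat\<close> is a quadratic polynomial in \<open>X\<close>.\<close>

definition wmat :: "real \<Rightarrow> real^'d^'d \<Rightarrow> real^'r^'d \<Rightarrow> real^'d^'d" where
  "wmat \<rho> Sh X = (2*\<rho>) *\<^sub>R ((mat 1 - X ** transpose X) ** Sh)"

definition wmat_deriv :: "real \<Rightarrow> real^'d^'d \<Rightarrow> real^'r^'d \<Rightarrow> real^'r^'d \<Rightarrow> real^'d^'d" where
  "wmat_deriv \<rho> Sh X D = - ((2*\<rho>) *\<^sub>R ((D ** transpose X + X ** transpose D) ** Sh))"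

definition wmat_rem :: "real \<Rightarrow> real^'d^'d \<Rightarrow> real^'r^'d \<Rightarrow> real^'d^'d" where
  "wmat_rem \<rho> Sh D = - ((2*\<rho>) *\<^sub>R ((D ** transpose D) ** Sh))"

lemma wmat_add: "wmat \<rho> Sh (X + D) = wmat \<rho> Sh X + wmat_deriv \<rho> Sh X D + wmat_rem \<rho> Sh D"
proof -
  have "(X + D) ** transpose (X + D) =
      X ** transpose X + (D ** transpose X + X ** transpose D) + D ** transpose D"
    by (simp add: transpose_add matrix_add_ldistrib matrix_add_rdistrib algebra_simps)
  thus ?thesis
    unfolding wmat_def wmat_deriv_def wmat_rem_def
    by (simp add: matrix_diff_rdistrib matrix_add_rdistrib algebra_simps scaleR_diff_right)
qed

lemma wsm_eq_huber: "0 < \<rho> \<Longrightarrow> wsm \<rho> Sh X \<mu> = huber (\<mu>*\<rho>) (wmat \<rho> Sh X)"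
  unfolding wsm_def wfun_def huber_def wmat_def by (simp add: mult.assoc)

lemma linear_wmat_deriv: "linear (wmat_deriv \<rho> Sh X)"
proof (rule linearI)
  fix D1 D2
  show "wmat_deriv \<rho> Sh X (D1 + D2) = wmat_deriv \<rho> Sh X D1 + wmat_deriv \<rho> Sh X D2"
    unfolding wmat_deriv_def
    by (simp add: transpose_add matrix_add_ldistrib matrix_add_rdistrib algebra_simps)
next
  fix k D
  show "wmat_deriv \<rho> Sh X (k *\<^sub>R D) = k *\<^sub>R wmat_deriv \<rho> Sh X D"
    unfolding wmat_deriv_def
    by (simp add: transpose_scalar matrix_scalar_ac scalar_matrix_assoc[symmetric]
        matrix_add_rdistrib scaleR_add_right scaleR_diff_right mult_ac)
qed

lemma norm_wmat_deriv_le: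
  assumes "0 < \<rho>"
  shows "norm (wmat_deriv \<rho> Sh X D) \<le> 2*\<rho>*(2*norm X*norm D)*norm Sh"
proof -
  have "norm (D ** transpose X) \<le> norm X * norm D"
    using norm_matrix_mult_le[of D "transpose X"] by (simp add: norm_transpose mult.commute)
  moreover have "norm (X ** transpose D) \<le> norm X * norm D"
    using norm_matrix_mult_le[of X "transpose D"] by (simp add: norm_transpose)
  ultimately have "norm (D ** transpose X + X ** transpose D) \<le> 2*norm X*norm D"
    using norm_triangle_ineq[of "D ** transpose X" "X ** transpose D"] by linarith
  hence "norm ((D ** transpose X + X ** transpose D) ** Sh) \<le> (2*norm X*norm D) * norm Sh"
    using norm_matrix_mult_le[of "D ** transpose X + X ** transpose D" Sh]
    by (meson mult_right_mono norm_ge_zero order_trans)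
  thus ?thesis using assms unfolding wmat_deriv_def by (simp add: mult_ac)
qed

lemma norm_wmat_rem_le: "0 < \<rho> \<Longrightarrow> norm (wmat_rem \<rho> Sh D) \<le> 2*\<rho>*(norm D)\<^sup>2*norm Sh"
proof -
  assume "0 < \<rho>"
  have "norm ((D ** transpose D) ** Sh) \<le> norm (D ** transpose D) * norm Sh"
    by (rule norm_matrix_mult_le)
  also have "\<dots> \<le> (norm D)\<^sup>2 * norm Sh"
    using norm_matrix_mult_le[of D "transpose D"]
    by (simp add: norm_transpose mult_right_mono power2_eq_square)
  finally show ?thesis using \<open>0 < \<rho>\<close> unfolding wmat_rem_def by (simp add: mult.assoc)
qed

text \<open>For a linear functional \<open>f\<close>, \<open>adjoint f 1\<close> is its Riesz representer.\<close>

definition wsm_grad :: "real \<Rightarrow> real^'d^'d \<Rightarrow> real^'r^'d \<Rightarrow> real \<Rightarrow> real^'r^'d" where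
  "wsm_grad \<rho> Sh X \<mu> = adjoint (\<lambda>D. huber_grad (\<mu>*\<rho>) (wmat \<rho> Sh X) \<bullet> wmat_deriv \<rho> Sh X D) 1"

lemma inner_wsm_grad:
  "wsm_grad \<rho> Sh X \<mu> \<bullet> D = huber_grad (\<mu>*\<rho>) (wmat \<rho> Sh X) \<bullet> wmat_deriv \<rho> Sh X D"
proof -
  have "linear (\<lambda>D. huber_grad (\<mu>*\<rho>) (wmat \<rho> Sh X) \<bullet> wmat_deriv \<rho> Sh X D)"
    using linear_wmat_deriv[of \<rho> Sh X] by (simp add: linear_iff inner_add_right)
  from adjoint_works[OF this, of D 1] show ?thesis
    unfolding wsm_grad_def by (simp add: inner_commute)
qed

lemma norm_wsm_grad_le:
  assumes \<rho>: "0 < \<rho>" and \<mu>: "0 < \<mu>"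
  shows "norm (wsm_grad \<rho> Sh X \<mu>) \<le> 4*\<rho>*norm X*norm Sh"
proof -
  define G where "G = wsm_grad \<rho> Sh X \<mu>"
  have "(norm G)\<^sup>2 = huber_grad (\<mu>*\<rho>) (wmat \<rho> Sh X) \<bullet> wmat_deriv \<rho> Sh X G"
    unfolding G_def power2_norm_eq_inner by (rule inner_wsm_grad)
  also have "\<dots> \<le> norm (huber_grad (\<mu>*\<rho>) (wmat \<rho> Sh X)) * norm (wmat_deriv \<rho> Sh X G)"
    by (rule norm_cauchy_schwarz)
  also have "\<dots> \<le> 1 * (2*\<rho>*(2*norm X*norm G)*norm Sh)"
    using norm_huber_grad_le[of "\<mu>*\<rho>"] norm_wmat_deriv_le[OF \<rho>] \<rho> \<mu>
    by (intro mult_mono) auto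
  finally have "norm G * norm G \<le> (4*\<rho>*norm X*norm Sh) * norm G"
    by (simp add: algebra_simps power2_eq_square)
  hence "norm G = 0 \<or> norm G \<le> 4*\<rho>*norm X*norm Sh"
    using mult_right_le_imp_le[of "norm G" "norm G" "4*\<rho>*norm X*norm Sh"] by force
  moreover have "0 \<le> 4*\<rho>*norm X*norm Sh" using \<rho> by simp
  ultimately show ?thesis unfolding G_def by linarith
qed

lemma wsm_taylor_bounds:
  fixes X D :: "real^'r^'d" and Sh :: "real^'d^'d"
  assumes \<rho>: "0 < \<rho>" and \<mu>: "0 < \<mu>" and D: "norm D \<le> 1"
  shows "wsm \<rho> Sh (X + D) \<mu> - wsm \<rho> Sh X \<mu> - wsm_grad \<rho> Sh X \<mu> \<bullet> D
           \<le> (2*\<rho>*(norm Sh)\<^sup>2*(2*norm X + 1)\<^sup>2/\<mu> + 2*\<rho>*norm Sh) * (norm D)\<^sup>2"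
    and "- (2*\<rho>*norm Sh * (norm D)\<^sup>2)
           \<le> wsm \<rho> Sh (X + D) \<mu> - wsm \<rho> Sh X \<mu> - wsm_grad \<rho> Sh X \<mu> \<bullet> D"
proof -
  define c v w where "c = \<mu>*\<rho>" "v = wmat \<rho> Sh X" "w = wmat \<rho> Sh (X + D)"
  have c: "0 < c" using \<rho> \<mu> by (simp add: c_v_w_def)
  have wv: "w - v = wmat_deriv \<rho> Sh X D + wmat_rem \<rho> Sh D"
    unfolding c_v_w_def wmat_add by simp
  have lin: "huber_grad c v \<bullet> (w - v) = wsm_grad \<rho> Sh X \<mu> \<bullet> D + huber_grad c v \<bullet> wmat_rem \<rho> Sh D"
    unfolding wv inner_add_right by (simp add: inner_wsm_grad c_v_w_def)
  have rem: "\<bar>huber_grad c v \<bullet> wmat_rem \<rho> Sh D\<bar> \<le> 2*\<rho>*(norm D)\<^sup>2*norm Sh"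
  proof -
    have "\<bar>huber_grad c v \<bullet> wmat_rem \<rho> Sh D\<bar> \<le> norm (huber_grad c v) * norm (wmat_rem \<rho> Sh D)"
      by (rule Cauchy_Schwarz_ineq2)
    also have "\<dots> \<le> 1 * (2*\<rho>*(norm D)\<^sup>2*norm Sh)"
      using norm_huber_grad_le[OF c] norm_wmat_rem_le[OF \<rho>] by (intro mult_mono) auto
    finally show ?thesis by simp
  qed
  have wsm: "wsm \<rho> Sh (X + D) \<mu> = huber c w" "wsm \<rho> Sh X \<mu> = huber c v"
    unfolding c_v_w_def wsm_eq_huber[OF \<rho>] by simp_all
  have "(norm D)\<^sup>2 \<le> norm D" using D by (simp add: power2_eq_square mult_left_le_one_le)
  hence "norm (w - v) \<le> 2*\<rho>*norm Sh*(2*norm X + 1)*norm D"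
  proof -
    have "norm (w - v) \<le> norm (wmat_deriv \<rho> Sh X D) + norm (wmat_rem \<rho> Sh D)"
      unfolding wv by (rule norm_triangle_ineq)
    also have "\<dots> \<le> 2*\<rho>*(2*norm X*norm D)*norm Sh + 2*\<rho>*(norm D)\<^sup>2*norm Sh"
      using norm_wmat_deriv_le[OF \<rho>] norm_wmat_rem_le[OF \<rho>] by (rule add_mono)
    also have "\<dots> \<le> 2*\<rho>*(2*norm X*norm D)*norm Sh + 2*\<rho>*norm D*norm Sh"
      using \<open>(norm D)\<^sup>2 \<le> norm D\<close> \<rho> by (simp add: mult_right_mono)
    finally show ?thesis by (simp add: algebra_simps)
  qed
  hence "(norm (w - v))\<^sup>2 / (2*c) \<le> (2*\<rho>*norm Sh*(2*norm X + 1)*norm D)\<^sup>2 / (2*c)"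
    using c by (intro divide_right_mono power_mono) auto
  also have "\<dots> = 2*\<rho>*(norm Sh)\<^sup>2*(2*norm X + 1)\<^sup>2/\<mu> * (norm D)\<^sup>2"
    using \<rho> \<mu> unfolding c_v_w_def by (simp add: field_simps power2_eq_square)
  finally have quad: "(norm (w - v))\<^sup>2 / (2*c) \<le> 2*\<rho>*(norm Sh)\<^sup>2*(2*norm X + 1)\<^sup>2/\<mu> * (norm D)\<^sup>2" .
  show "wsm \<rho> Sh (X + D) \<mu> - wsm \<rho> Sh X \<mu> - wsm_grad \<rho> Sh X \<mu> \<bullet> D
      \<le> (2*\<rho>*(norm Sh)\<^sup>2*(2*norm X + 1)\<^sup>2/\<mu> + 2*\<rho>*norm Sh) * (norm D)\<^sup>2"
    using huber_le_linearization[OF c, of w v] quad rem lin wsm by (simp add: algebra_simps)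
  show "- (2*\<rho>*norm Sh * (norm D)\<^sup>2) \<le> wsm \<rho> Sh (X + D) \<mu> - wsm \<rho> Sh X \<mu> - wsm_grad \<rho> Sh X \<mu> \<bullet> D"
    using huber_ge_linearization[OF c, of v w] rem lin wsm by (simp add: algebra_simps)
qed

lemma has_derivative_of_quadratic_remainder:
  fixes f :: "'a::real_inner \<Rightarrow> real"
  assumes rem: "\<And>D. norm D \<le> 1 \<Longrightarrow> \<bar>f (x + D) - f x - G \<bullet> D\<bar> \<le> K * (norm D)\<^sup>2"
  shows "(f has_derivative (\<lambda>h. G \<bullet> h)) (at x)"
  unfolding has_derivative_at_alt
proof (intro conjI allI impI)
  show "bounded_linear ((\<bullet>) G)" by (rule bounded_linear_inner_right)
  fix e :: real assume e: "0 < e"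
  define d where "d = min 1 (e / (\<bar>K\<bar> + 1))"
  show "\<exists>d>0. \<forall>y. norm (y - x) < d \<longrightarrow> norm (f y - f x - G \<bullet> (y - x)) \<le> e * norm (y - x)"
  proof (intro exI conjI allI impI)
    show "0 < d" using e by (simp add: d_def)
    fix y assume y: "norm (y - x) < d"
    define D where "D = y - x"
    have D1: "norm D \<le> 1" and De: "norm D * (\<bar>K\<bar> + 1) \<le> e"
      using y unfolding D_def d_def by (simp_all add: field_simps)
    have "\<bar>f (x + D) - f x - G \<bullet> D\<bar> \<le> (\<bar>K\<bar> + 1) * (norm D)\<^sup>2"
      using order_trans[OF rem[OF D1] mult_right_mono[of K "\<bar>K\<bar> + 1" "(norm D)\<^sup>2"]] by simp
    also have "\<dots> = (norm D * (\<bar>K\<bar> + 1)) * norm D" by (simp add: power2_eq_square mult_ac)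
    also have "\<dots> \<le> e * norm D" using De by (simp add: mult_right_mono)
    finally show "norm (f y - f x - G \<bullet> (y - x)) \<le> e * norm (y - x)" unfolding D_def by simp
  qed
qed

lemma egrad_eqI:
  assumes "(f has_derivative (\<lambda>h. G \<bullet> h)) (at x)"
  shows "egrad f x = G"
  unfolding egrad_def
proof (rule the_equality)
  show "(f has_derivative (\<lambda>h. G \<bullet> h)) (at x)" by (rule assms)
  fix G' assume "(f has_derivative (\<lambda>h. G' \<bullet> h)) (at x)"
  from has_derivative_unique[OF this assms] have "(G' - G) \<bullet> (G' - G) = 0"
    by (metis inner_diff_left right_minus_eq)
  thus "G' = G" by simp
qed

lemma has_derivative_wsm:
  fixes X :: "real^'r^'d"
  assumes \<rho>: "0 < \<rho>" and \<mu>: "0 < \<mu>"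
  shows "((\<lambda>Y. wsm \<rho> Sh Y \<mu>) has_derivative (\<lambda>h. wsm_grad \<rho> Sh X \<mu> \<bullet> h)) (at X)"
proof (rule has_derivative_of_quadratic_remainder)
  fix D :: "real^'r^'d" assume D: "norm D \<le> 1"
  define K where "K = 2*\<rho>*(norm Sh)\<^sup>2*(2*norm X + 1)\<^sup>2/\<mu> + 2*\<rho>*norm Sh"
  have "2*\<rho>*norm Sh * (norm D)\<^sup>2 \<le> K * (norm D)\<^sup>2"
    using \<rho> \<mu> by (intro mult_right_mono) (auto simp: K_def)
  thus "\<bar>wsm \<rho> Sh (X + D) \<mu> - wsm \<rho> Sh X \<mu> - wsm_grad \<rho> Sh X \<mu> \<bullet> D\<bar> \<le> K * (norm D)\<^sup>2"
    using wsm_taylor_bounds[OF \<rho> \<mu> D, of Sh X] unfolding K_def abs_le_iff by linarith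
qed

lemma egrad_gsm:
  assumes u: "\<forall>Y. (u has_derivative (\<lambda>H. gu Y \<bullet> H)) (at Y)" and \<rho>: "0 < \<rho>" and \<mu>: "0 < \<mu>"
  shows "egrad (\<lambda>Y. gsm u \<rho> Sh Y \<mu>) X = gu X + wsm_grad \<rho> Sh X \<mu>"
proof (rule egrad_eqI)
  have "((\<lambda>Y. u Y + wsm \<rho> Sh Y \<mu>) has_derivative (\<lambda>h. gu X \<bullet> h + wsm_grad \<rho> Sh X \<mu> \<bullet> h)) (at X)"
    using u has_derivative_wsm[OF \<rho> \<mu>] by (intro has_derivative_add) auto
  thus "((\<lambda>Y. gsm u \<rho> Sh Y \<mu>) has_derivative (\<lambda>h. (gu X + wsm_grad \<rho> Sh X \<mu>) \<bullet> h)) (at X)"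
    unfolding gsm_def by (simp add: inner_add_left)
qed

lemma lipschitz_gradient_taylor_bound:
  fixes u :: "'a::real_inner \<Rightarrow> real"
  assumes u: "\<forall>Y. (u has_derivative (\<lambda>H. gu Y \<bullet> H)) (at Y)"
    and L: "\<forall>Y Z. norm (gu Y - gu Z) \<le> L * norm (Y - Z)" "0 \<le> L"
  shows "\<bar>u (X + D) - u X - gu X \<bullet> D\<bar> \<le> L * (norm D)\<^sup>2"
proof -
  define S where "S = cball X (norm D)"
  have "norm (u (X + D) - u X - gu X \<bullet> (X + D - X)) \<le> norm (X + D - X) * (L * norm D)"
  proof (rule differentiable_bound_linearization[where S=S and f'="\<lambda>Y H. gu Y \<bullet> H"])
    fix t :: real assume "t \<in> {0..1}"
    thus "X + t *\<^sub>R (X + D - X) \<in> S" unfolding S_def by (auto simp: dist_norm mult_left_le_one_le)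
  next
    fix Y assume "Y \<in> S"
    show "(u has_derivative (\<lambda>H. gu Y \<bullet> H)) (at Y within S)"
      using u by (auto intro: has_derivative_at_withinI)
  next
    fix Y assume Y: "Y \<in> S"
    show "onorm ((\<lambda>H. gu Y \<bullet> H) - (\<lambda>H. gu X \<bullet> H)) \<le> L * norm D"
    proof (rule onorm_bound)
      show "0 \<le> L * norm D" using L by simp
      fix h
      have "norm (Y - X) \<le> norm D" using Y by (simp add: S_def dist_norm norm_minus_commute)
      hence "norm (gu Y - gu X) \<le> L * norm D"
        using L by (meson mult_left_mono order_trans)
      hence "\<bar>(gu Y - gu X) \<bullet> h\<bar> \<le> L * norm D * norm h"
        using Cauchy_Schwarz_ineq2[of "gu Y - gu X" h] by (meson mult_right_mono norm_ge_zero order_trans)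
      thus "norm (((\<lambda>H. gu Y \<bullet> H) - (\<lambda>H. gu X \<bullet> H)) h) \<le> L * norm D * norm h"
        by (simp add: inner_diff_left)
    qed
  qed (simp add: S_def)
  thus ?thesis by (simp add: power2_eq_square mult_ac)
qed

lemma norm_egrad_gsm_le:
  assumes u: "\<forall>Y. (u has_derivative (\<lambda>H. gu Y \<bullet> H)) (at Y)"
    and Lu: "\<forall>Y Z. norm (gu Y - gu Z) \<le> Lu * norm (Y - Z)"
    and \<rho>: "0 < \<rho>" and \<mu>: "0 < \<mu>"
  shows "norm (egrad (\<lambda>Y. gsm u \<rho> Sh Y \<mu>) X) \<le> norm (gu 0) + Lu * norm X + 4*\<rho>*norm X*norm Sh"
proof -
  have "norm (gu X) \<le> norm (gu 0) + Lu * norm X"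
    using Lu[rule_format, of X 0] norm_triangle_ineq2[of "gu X" "gu 0"] by simp
  thus ?thesis
    using norm_wsm_grad_le[OF \<rho> \<mu>, of Sh X] norm_triangle_ineq[of "gu X" "wsm_grad \<rho> Sh X \<mu>"]
    unfolding egrad_gsm[OF u \<rho> \<mu>] by linarith
qed

lemma gsm_taylor_upper:
  assumes u: "\<forall>Y. (u has_derivative (\<lambda>H. gu Y \<bullet> H)) (at Y)"
    and Lu: "\<forall>Y Z. norm (gu Y - gu Z) \<le> Lu * norm (Y - Z)" "0 \<le> Lu"
    and \<rho>: "0 < \<rho>" and \<mu>: "0 < \<mu>" and D: "norm D \<le> 1"
  shows "gsm u \<rho> Sh (X + D) \<mu> - gsm u \<rho> Sh X \<mu> - egrad (\<lambda>Y. gsm u \<rho> Sh Y \<mu>) X \<bullet> D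
    \<le> (Lu + 2*\<rho>*norm Sh + 2*\<rho>*(norm Sh)\<^sup>2*(2*norm X + 1)\<^sup>2/\<mu>) * (norm D)\<^sup>2"
  using lipschitz_gradient_taylor_bound[OF u Lu, of X D] wsm_taylor_bounds(1)[OF \<rho> \<mu> D, of Sh X]
  unfolding egrad_gsm[OF u \<rho> \<mu>] unfolding gsm_def by (simp add: inner_add_left algebra_simps)

subsection \<open>Second-order behaviour of a retraction\<close>

lemma norm_linear_le_Basis_bound:
  fixes L :: "'a::euclidean_space \<Rightarrow> 'b::real_normed_vector"
  assumes L: "linear L" and C: "\<And>b. b \<in> Basis \<Longrightarrow> norm (L b) \<le> C"
  shows "norm (L k) \<le> real DIM('a) * C * norm k"
proof -
  have "L k = (\<Sum>b\<in>Basis. (k \<bullet> b) *\<^sub>R L b)"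
    by (subst euclidean_representation[of k, symmetric])
      (simp add: linear_sum[OF L] linear_scale[OF L] o_def)
  hence "norm (L k) \<le> (\<Sum>b\<in>Basis. norm ((k \<bullet> b) *\<^sub>R L b))"
    by (simp only: norm_sum)
  also have "\<dots> \<le> (\<Sum>b\<in>(Basis::'a set). norm k * C)"
  proof (rule sum_mono)
    fix b :: 'a assume b: "b \<in> Basis"
    show "norm ((k \<bullet> b) *\<^sub>R L b) \<le> norm k * C"
      using Basis_le_norm[OF b, of k] C[OF b] by (simp add: mult_mono)
  qed
  finally show ?thesis by (simp add: mult_ac)
qed

lemma C1_lipschitz_on_segments:
  fixes G :: "'a::euclidean_space \<Rightarrow> 'b::real_normed_vector"
  assumes G: "Ck 1 U G" and K: "compact K" "K \<subseteq> U"
  obtains L where "0 \<le> L"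
    "\<And>q0 q. closed_segment q0 q \<subseteq> K \<Longrightarrow> norm (G q - G q0) \<le> L * norm (q - q0)"
proof -
  have diff: "\<And>x. x \<in> U \<Longrightarrow> (G has_derivative frechet_derivative G (at x)) (at x)"
    and cont: "\<And>h. continuous_on U (\<lambda>x. frechet_derivative G (at x) h)"
    using G unfolding One_nat_def Ck.simps frechet_derivative_works by blast+
  have "compact (\<Union>b\<in>Basis. (\<lambda>q. frechet_derivative G (at q) b) ` K)"
    using K by (intro compact_UN compact_continuous_image continuous_on_subset[OF cont]) auto
  then obtain C0 where "\<forall>y \<in> (\<Union>b\<in>Basis. (\<lambda>q. frechet_derivative G (at q) b) ` K). norm y \<le> C0"
    by (metis compact_imp_bounded bounded_iff)
  then have C: "\<And>b q. b \<in> Basis \<Longrightarrow> q \<in> K \<Longrightarrow> norm (frechet_derivative G (at q) b) \<le> \<bar>C0\<bar>"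
    by force
  show ?thesis
  proof
    show "0 \<le> real DIM('a) * \<bar>C0\<bar>" by simp
    fix q0 q assume S: "closed_segment q0 q \<subseteq> K"
    show "norm (G q - G q0) \<le> real DIM('a) * \<bar>C0\<bar> * norm (q - q0)"
    proof (rule differentiable_bound[where S="closed_segment q0 q" and f'="\<lambda>x. frechet_derivative G (at x)"])
      fix x assume x: "x \<in> closed_segment q0 q"
      hence G': "(G has_derivative frechet_derivative G (at x)) (at x)" using S K diff by blast
      thus "(G has_derivative frechet_derivative G (at x)) (at x within closed_segment q0 q)"
        by (rule has_derivative_at_withinI)
      show "onorm (frechet_derivative G (at x)) \<le> real DIM('a) * \<bar>C0\<bar>"
        using x S C norm_linear_le_Basis_bound[OF has_derivative_linear[OF G']]
        by (intro onorm_bound) auto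
    qed auto
  qed
qed

lemma C2_taylor_bound_on_segments:
  fixes F :: "'a::euclidean_space \<Rightarrow> 'b::real_normed_vector"
  assumes F: "Ck 2 U F" and K: "compact K" "K \<subseteq> U"
  obtains M where "0 \<le> M"
    "\<And>q0 q. closed_segment q0 q \<subseteq> K \<Longrightarrow>
       norm (F q - F q0 - frechet_derivative F (at q0) (q - q0)) \<le> M * (norm (q - q0))\<^sup>2"
proof -
  define F' where "F' x = frechet_derivative F (at x)" for x
  have diff: "\<And>x. x \<in> U \<Longrightarrow> (F has_derivative F' x) (at x)"
    and C1: "\<And>h. Ck 1 U (\<lambda>x. F' x h)"
    using F Ck.simps(2)[of 1, unfolded Suc_1] unfolding F'_def frechet_derivative_works by blast+
  have "\<forall>b. \<exists>L. 0 \<le> L \<and>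
      (\<forall>q0 q. closed_segment q0 q \<subseteq> K \<longrightarrow> norm (F' q b - F' q0 b) \<le> L * norm (q - q0))"
  proof
    fix b
    obtain L where "0 \<le> L"
      "\<And>q0 q. closed_segment q0 q \<subseteq> K \<Longrightarrow> norm (F' q b - F' q0 b) \<le> L * norm (q - q0)"
      using C1_lipschitz_on_segments[OF C1[of b] K] by blast
    thus "\<exists>L. 0 \<le> L \<and>
        (\<forall>q0 q. closed_segment q0 q \<subseteq> K \<longrightarrow> norm (F' q b - F' q0 b) \<le> L * norm (q - q0))"
      by blast
  qed
  then obtain L where L0: "\<And>b. 0 \<le> L b"
    and L: "\<And>b q0 q. closed_segment q0 q \<subseteq> K \<Longrightarrow> norm (F' q b - F' q0 b) \<le> L b * norm (q - q0)"
    unfolding choice_iff by blast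
  define L' where "L' = (\<Sum>b\<in>(Basis::'a set). L b)"
  have L': "L b \<le> L'" if "b \<in> Basis" for b
    unfolding L'_def using that L0 by (intro member_le_sum) auto
  have "0 \<le> L'" unfolding L'_def using L0 by (simp add: sum_nonneg)
  show ?thesis
  proof
    show "0 \<le> real DIM('a) * L'" using \<open>0 \<le> L'\<close> by simp
    fix q0 q assume S: "closed_segment q0 q \<subseteq> K"
    have "norm (F q - F q0 - F' q0 (q - q0)) \<le> norm (q - q0) * (real DIM('a) * (L' * norm (q - q0)))"
    proof (rule differentiable_bound_linearization[where S="closed_segment q0 q" and f'=F'])
      fix t :: real assume "t \<in> {0..1}"
      thus "q0 + t *\<^sub>R (q - q0) \<in> closed_segment q0 q"
        unfolding closed_segment_def by (auto intro!: exI[of _ t] simp: algebra_simps)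
    next
      fix x assume "x \<in> closed_segment q0 q"
      thus "(F has_derivative F' x) (at x within closed_segment q0 q)"
        using S K diff has_derivative_at_withinI by blast
    next
      fix x assume x: "x \<in> closed_segment q0 q"
      have "q0 \<in> U" "x \<in> U" using S K x by auto
      hence lin: "linear (\<lambda>h. F' x h - F' q0 h)"
        using diff has_derivative_linear linear_compose_sub by blast
      have "closed_segment q0 x \<subseteq> closed_segment q0 q"
        using x by (simp add: subset_closed_segment)
      hence "closed_segment q0 x \<subseteq> K" using S by blast
      hence Basis_bound: "norm (F' x b - F' q0 b) \<le> L' * norm (q - q0)" if "b \<in> Basis" for b
      proof -
        have "L b * norm (x - q0) \<le> L' * norm (q - q0)"
          using L'[OF that] L0[of b] segment_bound(1)[OF x] by (intro mult_mono) auto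
        thus ?thesis using L[OF \<open>closed_segment q0 x \<subseteq> K\<close>, of b] by linarith
      qed
      show "onorm (F' x - F' q0) \<le> real DIM('a) * (L' * norm (q - q0))"
      proof (rule onorm_bound)
        show "0 \<le> real DIM('a) * (L' * norm (q - q0))" using \<open>0 \<le> L'\<close> by simp
        fix h
        show "norm ((F' x - F' q0) h) \<le> real DIM('a) * (L' * norm (q - q0)) * norm h"
          using norm_linear_le_Basis_bound[OF lin Basis_bound] by (simp add: mult_ac)
      qed
    qed simp
    thus "norm (F q - F q0 - frechet_derivative F (at q0) (q - q0))
        \<le> real DIM('a) * L' * (norm (q - q0))\<^sup>2"
      unfolding F'_def by (simp add: power2_eq_square mult_ac)
  qed
qed

lemma compact_bounded_tangent_bundle:
  "compact {p \<in> (tangent_bundle :: ((real^'r^'d) \<times> (real^'r^'d)) set). norm (snd p) \<le> B}"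
    (is "compact ?K")
proof -
  have K: "?K = {p. transpose (fst p) ** fst p = mat 1} \<inter>
      {p. transpose (fst p) ** snd p + transpose (snd p) ** fst p = 0} \<inter> {p. norm (snd p) \<le> B}"
    unfolding tangent_bundle_def stiefel_def tangent_def by auto
  have "closed ?K"
    unfolding K by (intro closed_Int closed_Collect_eq closed_Collect_le continuous_intros)
  moreover have "bounded ?K"
    unfolding bounded_iff
  proof (intro exI ballI)
    fix p :: "(real^'r^'d) \<times> (real^'r^'d)" assume "p \<in> ?K"
    hence "norm (fst p) = sqrt (real CARD('r))" "norm (snd p) \<le> B"
      unfolding tangent_bundle_def by (auto simp: norm_stiefel)
    thus "norm p \<le> sqrt (real CARD('r)) + B"
      using norm_Pair_le[of "fst p" "snd p"] by simp
  qed
  ultimately show ?thesis by (simp add: compact_eq_bounded_closed)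
qed

lemma retraction_extension_derivative:
  fixes R :: "real^'r^'d \<Rightarrow> real^'r^'d \<Rightarrow> real^'r^'d"
    and F :: "(real^'r^'d) \<times> (real^'r^'d) \<Rightarrow> real^'r^'d"
  assumes FR: "\<forall>(X, D) \<in> tangent_bundle. F (X, D) = R X D"
    and X: "X \<in> stiefel" and D: "D \<in> tangent X"
    and R': "(R X has_derivative id) (at 0 within tangent X)"
    and F': "(F has_derivative F'0) (at (X, 0))"
  shows "F'0 (0, D) = D"
proof -
  have line: "((\<lambda>t::real. t *\<^sub>R D) has_derivative (\<lambda>t. t *\<^sub>R D)) (at 0)"
    by (intro derivative_eq_intros) auto
  have "((\<lambda>t::real. (X, t *\<^sub>R D)) has_derivative (\<lambda>t. (0, t *\<^sub>R D))) (at 0)"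
    by (intro derivative_eq_intros) auto
  from has_derivative_compose[OF this, of F F'0] F'
  have "((\<lambda>t::real. F (X, t *\<^sub>R D)) has_derivative (\<lambda>t. F'0 (0, t *\<^sub>R D))) (at 0)" by simp
  moreover have "F (X, t *\<^sub>R D) = R X (t *\<^sub>R D)" for t
    using FR X scaleR_tangent[OF D] unfolding tangent_bundle_def by auto
  ultimately have d1: "((\<lambda>t::real. R X (t *\<^sub>R D)) has_derivative (\<lambda>t. F'0 (0, t *\<^sub>R D))) (at 0)"
    by simp
  have "range (\<lambda>t::real. t *\<^sub>R D) \<subseteq> tangent X" using scaleR_tangent[OF D] by auto
  hence "(R X has_derivative id) (at ((\<lambda>t::real. t *\<^sub>R D) 0) within range (\<lambda>t::real. t *\<^sub>R D))"
    using has_derivative_subset[OF R'] by simp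
  from diff_chain_within[OF line this]
  have d2: "((\<lambda>t::real. R X (t *\<^sub>R D)) has_derivative (\<lambda>t. t *\<^sub>R D)) (at 0)"
    by (simp add: o_def)
  from fun_cong[OF has_derivative_unique[OF d1 d2], of 1] show ?thesis by simp
qed

lemma retraction_second_order_bound:
  fixes R :: "real^'r^'d \<Rightarrow> real^'r^'d \<Rightarrow> real^'r^'d"
  assumes "retraction R"
  obtains M where "0 \<le> M"
    "\<And>X D. X \<in> stiefel \<Longrightarrow> D \<in> tangent X \<Longrightarrow> norm D \<le> B \<Longrightarrow>
       norm (R X D - X - D) \<le> M * (norm D)\<^sup>2"
proof -
  from assms obtain U and F :: "(real^'r^'d) \<times> (real^'r^'d) \<Rightarrow> real^'r^'d"
    where TU: "tangent_bundle \<subseteq> U" and F: "smooth_on U F"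
      and FR: "\<forall>(X, D) \<in> tangent_bundle. F (X, D) = R X D"
      and R0: "\<forall>X\<in>stiefel. R X 0 = X \<and> (R X has_derivative id) (at 0 within tangent X)"
    unfolding retraction_def by blast
  define K where "K = {p \<in> (tangent_bundle :: ((real^'r^'d) \<times> (real^'r^'d)) set). norm (snd p) \<le> B}"
  have K: "compact K" "K \<subseteq> U" using TU compact_bounded_tangent_bundle unfolding K_def by auto
  have "Ck 2 U F" using F unfolding smooth_on_def by blast
  then obtain M where M: "0 \<le> M"
    "\<And>q0 q. closed_segment q0 q \<subseteq> K \<Longrightarrow>
       norm (F q - F q0 - frechet_derivative F (at q0) (q - q0)) \<le> M * (norm (q - q0))\<^sup>2"
    using C2_taylor_bound_on_segments K by blast
  have "Ck (Suc 0) U F" using F unfolding smooth_on_def by blast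
  hence Fdiff: "\<And>x. x \<in> U \<Longrightarrow> (F has_derivative frechet_derivative F (at x)) (at x)"
    by (simp add: frechet_derivative_works)
  show ?thesis
  proof (rule that[OF M(1)])
    fix X D :: "real^'r^'d" assume X: "X \<in> stiefel" and D: "D \<in> tangent X" and DB: "norm D \<le> B"
    have seg: "closed_segment (X, 0) (X, D) \<subseteq> K"
    proof
      fix p assume "p \<in> closed_segment (X, 0) (X, D)"
      then obtain t where t: "p = (1 - t) *\<^sub>R (X, 0) + t *\<^sub>R (X, D)" "0 \<le> t" "t \<le> 1"
        unfolding closed_segment_def by blast
      hence "p = (X, t *\<^sub>R D)" by (simp add: algebra_simps)
      moreover have "norm (t *\<^sub>R D) \<le> B" using t DB mult_left_le_one_le[of "norm D" t] by simp
      ultimately show "p \<in> K"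
        using X scaleR_tangent[OF D] unfolding K_def tangent_bundle_def by simp
    qed
    have R0X: "R X 0 = X" and R'X: "(R X has_derivative id) (at 0 within tangent X)"
      using R0 X by auto
    have b0: "(X, 0) \<in> tangent_bundle" and b1: "(X, D) \<in> tangent_bundle"
      using X D scaleR_tangent[OF D, of 0] unfolding tangent_bundle_def by auto
    have "F (X, 0) = X" using bspec[OF FR b0] R0X by simp
    moreover have "F (X, D) = R X D" using bspec[OF FR b1] by simp
    moreover have "frechet_derivative F (at (X, 0)) (0, D) = D"
      using b0 TU by (intro retraction_extension_derivative[OF FR X D R'X Fdiff]) blast
    ultimately show "norm (R X D - X - D) \<le> M * (norm D)\<^sup>2"
      using M(2)[OF seg] by (simp add: norm_Pair)
  qed
qed

subsection \<open>The proximal subproblem and sufficient decrease\<close>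

lemma prox_subproblem_decrease:
  fixes X V G :: "'a::real_inner" and s :: "'a \<Rightarrow> real"
  assumes s: "convex_on UNIV s" and \<mu>: "0 < \<mu>"
    and cone: "\<And>W t. W \<in> T \<Longrightarrow> t *\<^sub>R W \<in> T" and V: "V \<in> T"
    and opt: "\<forall>W\<in>T. G \<bullet> V + (norm V)\<^sup>2 / (2*\<mu>) + s (X + V) \<le> G \<bullet> W + (norm W)\<^sup>2 / (2*\<mu>) + s (X + W)"
  shows "(norm V)\<^sup>2 / \<mu> \<le> s X - s (X + V) - G \<bullet> V"
proof -
  define n A where "n = (norm V)\<^sup>2" and "A = s X - s (X + V) - G \<bullet> V"
  have n: "0 \<le> n" unfolding n_def by simp
  \<comment> \<open>compare \<open>V\<close> with the shorter step \<open>(1 - t) V\<close>\<close>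
  have shrink: "(2 - t) * n / (2*\<mu>) \<le> A" if t: "0 < t" "t \<le> 1" for t
  proof -
    have "s (X + (1 - t) *\<^sub>R V) \<le> (1 - t) * s (X + V) + t * s X"
      using convex_onD[OF s, of t "X + V" X] t by (simp add: algebra_simps)
    moreover have "(norm ((1 - t) *\<^sub>R V))\<^sup>2 = (1 - t)\<^sup>2 * n"
      unfolding n_def by (simp add: power_mult_distrib)
    moreover have "G \<bullet> V + n / (2*\<mu>) + s (X + V)
        \<le> G \<bullet> ((1 - t) *\<^sub>R V) + (norm ((1 - t) *\<^sub>R V))\<^sup>2 / (2*\<mu>) + s (X + (1 - t) *\<^sub>R V)"
      using opt cone[OF V] unfolding n_def by blast
    ultimately have "t * (G \<bullet> V + s (X + V) - s X) \<le> ((1 - t)\<^sup>2 - 1) * n / (2*\<mu>)"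
      by (simp add: algebra_simps add_divide_distrib diff_divide_distrib)
    also have "\<dots> = t * ((t - 2) * n / (2*\<mu>))"
      by (simp add: power2_eq_square algebra_simps)
    finally have "G \<bullet> V + s (X + V) - s X \<le> (t - 2) * n / (2*\<mu>)"
      using t(1) by (rule mult_left_le_imp_le)
    thus ?thesis unfolding A_def by (simp add: algebra_simps diff_divide_distrib)
  qed
  show ?thesis
  proof (rule field_le_epsilon)
    fix e :: real assume e: "0 < e"
    define t where "t = min 1 (2*\<mu>*e / (n + 1))"
    have t: "0 < t" "t \<le> 1" using e \<mu> n by (auto simp: t_def)
    have "t \<le> 2*\<mu>*e / (n + 1)" by (simp add: t_def)
    hence "t * (n + 1) \<le> 2*\<mu>*e" using n by (simp add: pos_le_divide_eq)
    hence "t * n \<le> 2*\<mu>*e" using t by (simp add: distrib_left)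
    hence "t * n / (2*\<mu>) \<le> e" using \<mu> by (simp add: pos_divide_le_eq mult.commute)
    moreover have "(2 - t) * n / (2*\<mu>) = (norm V)\<^sup>2 / \<mu> - t * n / (2*\<mu>)"
      using \<mu> unfolding n_def by (simp add: field_simps)
    ultimately show "(norm V)\<^sup>2 / \<mu> \<le> s X - s (X + V) - G \<bullet> V + e"
      using shrink[OF t] unfolding n_def A_def by linarith
  qed
qed

lemma prox_step_norm_le:
  fixes X V G :: "'a::real_inner"
  assumes dec: "(norm V)\<^sup>2 / \<mu> \<le> s X - s (X + V) - G \<bullet> V"
    and s: "\<forall>Y Z. \<bar>s Y - s Z\<bar> \<le> Ls * norm (Y - Z)" "0 \<le> Ls"
    and G: "norm G \<le> Gm" and \<mu>: "0 < \<mu>"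
  shows "norm V \<le> \<mu> * (Ls + Gm)"
proof (cases "V = 0")
  case True
  thus ?thesis using s(2) G \<mu> by (simp add: order_trans[OF norm_ge_zero G])
next
  case False
  have "s X - s (X + V) \<le> Ls * norm V" using s(1)[rule_format, of X "X + V"] by simp
  moreover have "- (G \<bullet> V) \<le> Gm * norm V"
    using Cauchy_Schwarz_ineq2[of G V] mult_right_mono[OF G norm_ge_zero[of V]] by linarith
  ultimately have "(norm V)\<^sup>2 / \<mu> \<le> (Ls + Gm) * norm V"
    using dec by (simp add: distrib_right)
  hence "norm V * norm V \<le> (\<mu> * (Ls + Gm)) * norm V"
    using \<mu> by (simp add: field_simps power2_eq_square)
  thus ?thesis using False by (simp add: mult_right_le_imp_le)
qed

lemma norm_retracted_step_le:
  assumes retr: "norm (Y - (X + a *\<^sub>R V)) \<le> M * (a * norm V)\<^sup>2"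
    and V: "norm V \<le> B" and a: "0 \<le> a" "a \<le> 1" and M: "0 \<le> M"
  shows "norm (Y - X) \<le> a * norm V * (1 + M * B)"
proof -
  have "M * (a * norm V)\<^sup>2 = a * norm V * (M * (a * norm V))"
    by (simp add: power2_eq_square mult_ac)
  also have "\<dots> \<le> a * norm V * (M * B)"
  proof -
    have "a * norm V \<le> B" using a V mult_left_le_one_le[of "norm V" a] by simp
    thus ?thesis using a M by (intro mult_left_mono) auto
  qed
  finally have rem: "norm (Y - (X + a *\<^sub>R V)) \<le> a * norm V * (M * B)" using retr by simp
  have "norm (Y - X) \<le> norm (a *\<^sub>R V) + norm (Y - (X + a *\<^sub>R V))"
    using norm_triangle_ineq[of "a *\<^sub>R V" "Y - (X + a *\<^sub>R V)"] by simp
  thus ?thesis using rem a by (simp add: algebra_simps)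
qed

text \<open>The retracted point \<open>Y\<close> deviates from \<open>X + a V\<close> only to second order in \<open>a\<close>,
  so for small \<open>a\<close> it inherits the first-order decrease guaranteed by \<open>prox\<close>.\<close>

lemma retracted_step_sufficient_decrease:
  fixes g s :: "'a::real_inner \<Rightarrow> real" and X V G Y :: 'a
  assumes s_conv: "convex_on UNIV s"
    and s_lip: "\<forall>Y Z. \<bar>s Y - s Z\<bar> \<le> Ls * norm (Y - Z)" "0 \<le> Ls"
    and g_taylor: "\<And>D. norm D \<le> 1 \<Longrightarrow> g (X + D) - g X - G \<bullet> D \<le> K * (norm D)\<^sup>2" "0 \<le> K"
    and G: "norm G \<le> Gm"
    and prox: "(norm V)\<^sup>2 / \<mu> \<le> s X - s (X + V) - G \<bullet> V" and \<mu>: "0 < \<mu>"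
    and retr: "norm (Y - (X + a *\<^sub>R V)) \<le> M * (a * norm V)\<^sup>2" "0 \<le> M"
    and V: "norm V \<le> B"
    and a: "0 < a" "a \<le> 1" "a * (B * (1 + M * B)) \<le> 1"
      "a * \<mu> * ((Gm + Ls) * M + K * (1 + M * B)\<^sup>2) \<le> 1/2"
  shows "a / (2*\<mu>) * (norm V)\<^sup>2 \<le> g X + s X - (g Y + s Y)"
proof -
  define n e P where "n = norm V" and "e = norm (Y - (X + a *\<^sub>R V))"
    and "P = (Gm + Ls) * M + K * (1 + M * B)\<^sup>2"
  have n: "0 \<le> n" "n \<le> B" using V by (simp_all add: n_def)
  have Gm: "0 \<le> Gm" using G norm_ge_zero order_trans by blast
  have e: "e \<le> M * (a * n)\<^sup>2" using retr(1) by (simp add: e_def n_def)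
  have YX: "norm (Y - X) \<le> a * n * (1 + M * B)"
    using norm_retracted_step_le[OF retr(1) V _ a(2) retr(2)] a(1) by (simp add: n_def)
  have "n * (1 + M * B) \<le> B * (1 + M * B)"
    using n retr(2) by (intro mult_right_mono) auto
  hence "a * n * (1 + M * B) \<le> a * (B * (1 + M * B))"
    using a by (simp add: mult_left_mono mult.assoc)
  hence YX1: "norm (Y - X) \<le> 1" using YX a(3) by linarith
  have YX2: "(norm (Y - X))\<^sup>2 \<le> a\<^sup>2 * n\<^sup>2 * (1 + M * B)\<^sup>2"
    using power_mono[OF YX norm_ge_zero] by (simp add: power_mult_distrib)
  have "G \<bullet> (Y - X) = a * (G \<bullet> V) + G \<bullet> (Y - (X + a *\<^sub>R V))"
    by (simp add: inner_diff_right algebra_simps)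
  also have "\<dots> \<le> a * (G \<bullet> V) + Gm * e"
    using norm_cauchy_schwarz[of G "Y - (X + a *\<^sub>R V)"] mult_right_mono[OF G norm_ge_zero[of "Y - (X + a *\<^sub>R V)"]]
    unfolding e_def by linarith
  finally have g: "g Y - g X \<le> a * (G \<bullet> V) + Gm * e + K * (a\<^sup>2 * n\<^sup>2 * (1 + M * B)\<^sup>2)"
    using g_taylor(1)[OF YX1] mult_left_mono[OF YX2 g_taylor(2)] by simp
  have "s (X + a *\<^sub>R V) \<le> (1 - a) * s X + a * s (X + V)"
    using convex_onD[OF s_conv, of a X "X + V"] a by (simp add: algebra_simps)
  hence s: "s Y - s X \<le> a * (s (X + V) - s X) + Ls * e"
    using s_lip(1)[rule_format, of Y "X + a *\<^sub>R V"] unfolding e_def by (simp add: algebra_simps)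
  have "(Gm + Ls) * e \<le> (Gm + Ls) * (M * (a * n)\<^sup>2)"
    using e Gm s_lip(2) by (intro mult_left_mono) auto
  moreover have "a * (n\<^sup>2 / \<mu>) \<le> a * (s X - s (X + V) - G \<bullet> V)"
    using mult_left_mono[OF prox] a(1) unfolding n_def by simp
  ultimately have "g Y + s Y - (g X + s X)
      \<le> - (a * (n\<^sup>2 / \<mu>)) + (Gm + Ls) * (M * (a * n)\<^sup>2) + K * (a\<^sup>2 * n\<^sup>2 * (1 + M * B)\<^sup>2)"
    using g s by (simp add: algebra_simps)
  also have "\<dots> = - (a * n\<^sup>2 / \<mu>) + a * n\<^sup>2 * (a * P)"
    unfolding P_def by (simp add: algebra_simps power_mult_distrib power2_eq_square)
  also have "a * n\<^sup>2 * (a * P) \<le> a * n\<^sup>2 * (1 / (2*\<mu>))"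
    using a(1,4) \<mu> by (intro mult_left_mono) (auto simp: P_def field_simps)
  finally show ?thesis using \<mu> by (simp add: n_def field_simps)
qed

subsection \<open>The SMPG iteration\<close>

lemma lipschitz_constant_nonneg:
  fixes f :: "'a::euclidean_space \<Rightarrow> 'b::real_normed_vector"
  assumes "\<forall>Y Z. norm (f Y - f Z) \<le> L * norm (Y - Z)"
  shows "0 \<le> L"
proof -
  obtain b :: 'a where "b \<in> Basis" using nonempty_Basis by blast
  thus ?thesis using order_trans[OF norm_ge_zero assms[rule_format, of b 0]] by simp
qed

lemma smpg_subproblem_estimates:
  fixes u s :: "real^'r^'d \<Rightarrow> real" and gu :: "real^'r^'d \<Rightarrow> real^'r^'d" and Sh :: "real^'d^'d"
    and Lu \<rho> :: real
  defines "Gm \<equiv> norm (gu 0) + (Lu + 4*\<rho>*norm Sh) * sqrt (real CARD('r))"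
  assumes u_grad: "\<forall>Y. (u has_derivative (\<lambda>H. gu Y \<bullet> H)) (at Y)"
    and u_lip: "\<forall>Y Z. norm (gu Y - gu Z) \<le> Lu * norm (Y - Z)"
    and s_conv: "convex_on UNIV s"
    and s_lip: "\<forall>Y Z. \<bar>s Y - s Z\<bar> \<le> Ls * norm (Y - Z)" "0 \<le> Ls"
    and \<rho>: "0 < \<rho>" and \<mu>: "0 < \<mu>" and X: "X \<in> stiefel" and V: "V \<in> tangent X"
    and opt: "\<forall>W \<in> tangent X. subobj u s \<rho> Sh X \<mu> V \<le> subobj u s \<rho> Sh X \<mu> W"
  shows "norm (egrad (\<lambda>Y. gsm u \<rho> Sh Y \<mu>) X) \<le> Gm"
    and "(norm V)\<^sup>2 / \<mu> \<le> s X - s (X + V) - egrad (\<lambda>Y. gsm u \<rho> Sh Y \<mu>) X \<bullet> V"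
    and "norm V \<le> \<mu> * (Ls + Gm)"
proof -
  show G: "norm (egrad (\<lambda>Y. gsm u \<rho> Sh Y \<mu>) X) \<le> Gm"
    using norm_egrad_gsm_le[OF u_grad u_lip \<rho> \<mu>, of Sh X] norm_stiefel[OF X]
    by (simp add: Gm_def algebra_simps)
  show prox: "(norm V)\<^sup>2 / \<mu> \<le> s X - s (X + V) - egrad (\<lambda>Y. gsm u \<rho> Sh Y \<mu>) X \<bullet> V"
    using prox_subproblem_decrease[OF s_conv \<mu> scaleR_tangent V] opt by (simp add: subobj_def)
  show "norm V \<le> \<mu> * (Ls + Gm)" by (rule prox_step_norm_le[OF prox s_lip G \<mu>])
qed

text \<open>The step-size constant below is uniform in \<open>\<mu> \<le> \<mu>0\<close> because the \<open>1/\<mu>\<close> part of the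
  curvature of the smoothed penalty is compensated by the factor \<open>\<mu>\<close>.\<close>

lemma scaled_curvature_le:
  fixes a \<mu> \<mu>0 A E K0 K1 :: real
  assumes "0 < \<mu>" "\<mu> \<le> \<mu>0" "0 \<le> a" "0 \<le> A" "0 \<le> E" "0 \<le> K0"
  shows "a * \<mu> * (A + (K0 + K1/\<mu>) * E) \<le> a * (\<mu>0 * (A + K0 * E) + K1 * E)"
proof -
  have "\<mu> * (A + (K0 + K1/\<mu>) * E) = \<mu> * (A + K0 * E) + K1 * E"
    using assms(1) by (simp add: field_simps)
  also have "\<dots> \<le> \<mu>0 * (A + K0 * E) + K1 * E"
    using assms by (intro add_right_mono mult_right_mono) auto
  finally show ?thesis using assms(3) by (simp add: mult.assoc mult_left_mono)
qed

lemma smpg_step_sufficient_decrease: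
  fixes u s :: "real^'r^'d \<Rightarrow> real" and gu :: "real^'r^'d \<Rightarrow> real^'r^'d"
    and Sh :: "real^'d^'d" and R :: "real^'r^'d \<Rightarrow> real^'r^'d \<Rightarrow> real^'r^'d"
    and Lu Ls \<rho> \<mu>0 M :: real
  assumes Gm_def: "Gm = norm (gu 0) + (Lu + 4*\<rho>*norm Sh) * sqrt (real CARD('r))"
    and B_def: "B = \<mu>0 * (Ls + Gm)"
    and Q_def: "Q = \<mu>0 * ((Gm + Ls) * M + (Lu + 2*\<rho>*norm Sh) * (1 + M * B)\<^sup>2)
      + 2*\<rho>*(norm Sh)\<^sup>2*(2 * sqrt (real CARD('r)) + 1)\<^sup>2 * (1 + M * B)\<^sup>2"
    and u_grad: "\<forall>Y. (u has_derivative (\<lambda>H. gu Y \<bullet> H)) (at Y)"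
    and u_lip: "\<forall>Y Z. norm (gu Y - gu Z) \<le> Lu * norm (Y - Z)" "0 \<le> Lu"
    and s_conv: "convex_on UNIV s"
    and s_lip: "\<forall>Y Z. \<bar>s Y - s Z\<bar> \<le> Ls * norm (Y - Z)" "0 \<le> Ls" and \<rho>: "0 < \<rho>"
    and M: "0 \<le> M" "\<And>X D. X \<in> stiefel \<Longrightarrow> D \<in> tangent X \<Longrightarrow> norm D \<le> B \<Longrightarrow>
      norm (R X D - X - D) \<le> M * (norm D)\<^sup>2"
    and X: "X \<in> stiefel" and V: "V \<in> tangent X"
    and opt: "\<forall>W \<in> tangent X. subobj u s \<rho> Sh X \<mu> V \<le> subobj u s \<rho> Sh X \<mu> W"
    and \<mu>: "0 < \<mu>" "\<mu> \<le> \<mu>0"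
    and a: "0 < a" "a \<le> 1" "a * (B * (1 + M * B)) \<le> 1" "a * Q \<le> 1/2"
  shows "a / (2*\<mu>) * (norm V)\<^sup>2 \<le> fsm u s \<rho> Sh X \<mu> - fsm u s \<rho> Sh (R X (a *\<^sub>R V)) \<mu>"
proof -
  define K0 K1 where "K0 = Lu + 2*\<rho>*norm Sh"
    and "K1 = 2*\<rho>*(norm Sh)\<^sup>2*(2 * sqrt (real CARD('r)) + 1)\<^sup>2"
  note est = smpg_subproblem_estimates[OF u_grad u_lip(1) s_conv s_lip \<rho> \<mu>(1) X V opt, folded Gm_def]
  have Gm: "0 \<le> Gm" using est(1) norm_ge_zero order_trans by blast
  have "\<mu> * (Ls + Gm) \<le> B" unfolding B_def using \<mu> s_lip(2) Gm by (simp add: mult_right_mono)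
  hence VB: "norm V \<le> B" using est(3) by linarith
  have retr_a: "norm (R X (a *\<^sub>R V) - (X + a *\<^sub>R V)) \<le> M * (a * norm V)\<^sup>2"
    using M(2)[OF X scaleR_tangent[OF V, of a]] a VB mult_left_le_one_le[of "norm V" a]
    by (simp add: diff_diff_eq)
  have taylor: "gsm u \<rho> Sh (X + D) \<mu> - gsm u \<rho> Sh X \<mu> - egrad (\<lambda>Y. gsm u \<rho> Sh Y \<mu>) X \<bullet> D
      \<le> (K0 + K1/\<mu>) * (norm D)\<^sup>2" if "norm D \<le> 1" for D
    using gsm_taylor_upper[OF u_grad u_lip \<rho> \<mu>(1) that, of Sh X] norm_stiefel[OF X]
    by (simp add: K0_def K1_def add_divide_distrib)
  have K: "0 \<le> K0 + K1/\<mu>" using u_lip(2) \<rho> \<mu> by (simp add: K0_def K1_def)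
  have "a * \<mu> * ((Gm + Ls) * M + (K0 + K1/\<mu>) * (1 + M * B)\<^sup>2) \<le> a * Q"
    unfolding Q_def K0_def[symmetric] K1_def[symmetric]
    by (rule scaled_curvature_le) (use \<mu> a(1) Gm s_lip(2) M(1) u_lip(2) \<rho> in \<open>auto simp: K0_def\<close>)
  hence "a * \<mu> * ((Gm + Ls) * M + (K0 + K1/\<mu>) * (1 + M * B)\<^sup>2) \<le> 1/2" using a(4) by linarith
  from retracted_step_sufficient_decrease[OF s_conv s_lip taylor K est(1,2) \<mu>(1) retr_a M(1) VB
      a(1-3) this]
  show ?thesis by (simp add: fsm_def)
qed

lemma smpg_uniform_sufficient_decrease:
  fixes u s :: "real^'r^'d \<Rightarrow> real" and gu :: "real^'r^'d \<Rightarrow> real^'r^'d"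
    and Sh :: "real^'d^'d" and R :: "real^'r^'d \<Rightarrow> real^'r^'d \<Rightarrow> real^'r^'d"
  assumes u_grad: "\<forall>Y. (u has_derivative (\<lambda>H. gu Y \<bullet> H)) (at Y)"
    and u_lip: "\<forall>Y Z. norm (gu Y - gu Z) \<le> Lu * norm (Y - Z)"
    and s_conv: "convex_on UNIV s"
    and s_lip: "\<forall>Y Z. \<bar>s Y - s Z\<bar> \<le> Ls * norm (Y - Z)"
    and \<rho>: "0 < \<rho>" and retr: "retraction R" and \<mu>0: "0 < \<mu>0"
  obtains ab where "0 < ab"
    "\<And>X V \<mu> a. X \<in> stiefel \<Longrightarrow> V \<in> tangent X \<Longrightarrow>
       \<forall>W \<in> tangent X. subobj u s \<rho> Sh X \<mu> V \<le> subobj u s \<rho> Sh X \<mu> W \<Longrightarrow>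
       0 < \<mu> \<Longrightarrow> \<mu> \<le> \<mu>0 \<Longrightarrow> 0 < a \<Longrightarrow> a \<le> ab \<Longrightarrow>
       a / (2*\<mu>) * (norm V)\<^sup>2 \<le> fsm u s \<rho> Sh X \<mu> - fsm u s \<rho> Sh (R X (a *\<^sub>R V)) \<mu>"
proof -
  have Lu: "0 \<le> Lu" and Ls: "0 \<le> Ls"
    using lipschitz_constant_nonneg[of gu Lu] lipschitz_constant_nonneg[of s Ls] u_lip s_lip by auto
  define Gm where "Gm = norm (gu 0) + (Lu + 4*\<rho>*norm Sh) * sqrt (real CARD('r))"
  define B where "B = \<mu>0 * (Ls + Gm)"
  obtain M where M: "0 \<le> M" "\<And>X D. X \<in> stiefel \<Longrightarrow> D \<in> tangent X \<Longrightarrow> norm D \<le> B \<Longrightarrow>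
      norm (R X D - X - D) \<le> M * (norm D)\<^sup>2"
    using retraction_second_order_bound[OF retr, where B=B] by blast
  define Q where "Q = \<mu>0 * ((Gm + Ls) * M + (Lu + 2*\<rho>*norm Sh) * (1 + M * B)\<^sup>2)
    + 2*\<rho>*(norm Sh)\<^sup>2*(2 * sqrt (real CARD('r)) + 1)\<^sup>2 * (1 + M * B)\<^sup>2"
  define W where "W = B * (1 + M * B)"
  have "0 \<le> Q" "0 \<le> W" using Lu Ls \<rho> \<mu>0 M(1) by (simp_all add: Gm_def B_def Q_def W_def)
  hence ab: "0 < 1 / (1 + 2*Q + W)" "1 / (1 + 2*Q + W) \<le> 1"
    "1 / (1 + 2*Q + W) * W \<le> 1" "1 / (1 + 2*Q + W) * Q \<le> 1/2"
    by (simp_all add: field_simps)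
  show ?thesis
  proof (rule that[OF ab(1)])
    fix X V \<mu> a assume X: "X \<in> stiefel" "V \<in> tangent X"
      "\<forall>W \<in> tangent X. subobj u s \<rho> Sh X \<mu> V \<le> subobj u s \<rho> Sh X \<mu> W"
      "0 < \<mu>" "\<mu> \<le> \<mu>0" and a: "0 < a" "a \<le> 1 / (1 + 2*Q + W)"
    have "a \<le> 1" "a * W \<le> 1" "a * Q \<le> 1/2"
      using ab(2-4) a mult_right_mono[OF a(2) \<open>0 \<le> W\<close>] mult_right_mono[OF a(2) \<open>0 \<le> Q\<close>]
      by linarith+
    with smpg_step_sufficient_decrease[OF Gm_def B_def Q_def u_grad u_lip Lu s_conv s_lip Ls \<rho> M X a(1)]
    show "a / (2*\<mu>) * (norm V)\<^sup>2 \<le> fsm u s \<rho> Sh X \<mu> - fsm u s \<rho> Sh (R X (a *\<^sub>R V)) \<mu>"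
      unfolding W_def by blast
  qed
qed

lemma smpg_iterates_feasible:
  fixes X V :: "nat \<Rightarrow> real^'r^'d" and \<mu> \<alpha> :: "nat \<Rightarrow> real" and stop :: "nat \<Rightarrow> bool"
  assumes retr: "retraction R" and X0: "X 0 \<in> stiefel" and \<mu>0: "0 < \<mu> 0" and \<theta>: "0 < \<theta>" "\<theta> < 1"
    and in_tangent: "\<And>k. \<forall>j<k. \<not> stop j \<Longrightarrow> V k \<in> tangent (X k)"
    and update: "\<And>k. \<forall>j\<le>k. \<not> stop j \<Longrightarrow> X (Suc k) = R (X k) (\<alpha> k *\<^sub>R V k) \<and>
                   \<mu> (Suc k) = (if norm (V k) > (\<mu> k)\<^sup>2 then \<mu> k else \<theta> * \<mu> k)"
  shows "\<forall>j<k. \<not> stop j \<Longrightarrow> X k \<in> stiefel \<and> 0 < \<mu> k \<and> \<mu> k \<le> \<mu> 0"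
proof (induction k)
  case 0
  thus ?case using X0 \<mu>0 by simp
next
  case (Suc k)
  hence IH: "X k \<in> stiefel" "0 < \<mu> k" "\<mu> k \<le> \<mu> 0"
    and upd: "X (Suc k) = R (X k) (\<alpha> k *\<^sub>R V k)"
      "\<mu> (Suc k) = (if norm (V k) > (\<mu> k)\<^sup>2 then \<mu> k else \<theta> * \<mu> k)"
    using update[of k] by (auto simp: less_Suc_eq_le)
  have "(X k, \<alpha> k *\<^sub>R V k) \<in> tangent_bundle"
    using IH(1) in_tangent[of k] Suc.prems scaleR_tangent unfolding tangent_bundle_def by auto
  moreover have "\<forall>(X, D) \<in> tangent_bundle. R X D \<in> stiefel" using retr by (simp add: retraction_def)
  ultimately have "X (Suc k) \<in> stiefel" using upd(1) by auto
  moreover have "\<theta> * \<mu> k \<le> \<mu> 0"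
    using \<theta> IH(2,3) mult_left_le_one_le[of "\<mu> k" \<theta>] by linarith
  ultimately show ?case using upd(2) IH \<theta> by auto
qed

lemma exists_step_between_powers:
  fixes \<beta> a0 :: real
  assumes \<beta>: "0 < \<beta>" "\<beta> < 1" and a0: "0 < a0"
  obtains ab where "0 < ab" "ab \<le> a0" "ab \<le> 1"
    "\<beta> ^ nat \<lceil>log \<beta> ab\<rceil> < ab" "\<beta> * ab \<le> \<beta> ^ nat \<lceil>log \<beta> ab\<rceil>"
proof -
  obtain N where N: "\<beta> ^ N < a0" using real_arch_pow_inv[OF a0 \<beta>(2)] by blast
  define ab where "ab = \<beta> ^ N * (1 + \<beta>) / 2"
  have pow: "0 < \<beta> ^ N" "\<beta> ^ N \<le> 1" using \<beta> by (auto simp: power_le_one)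
  have lt: "\<beta> ^ Suc N < ab" "ab < \<beta> ^ N" using pow \<beta> by (simp_all add: ab_def field_simps)
  have ab0: "0 < ab" using pow \<beta> by (simp add: ab_def)
  have "ln ab < real N * ln \<beta>"
    using lt(2) ab0 \<beta> by (simp add: ln_realpow[symmetric])
  moreover have "real (Suc N) * ln \<beta> < ln ab"
    using lt(1) ab0 \<beta> by (metis ln_less_cancel_iff ln_realpow zero_less_power)
  ultimately have "real N < log \<beta> ab" "log \<beta> ab \<le> real (Suc N)"
    using \<beta> by (simp_all add: log_def field_simps)
  hence m: "nat \<lceil>log \<beta> ab\<rceil> = Suc N" by (simp add: ceiling_eq_iff nat_eq_iff)
  show ?thesis
  proof (rule that[of ab])
    show "0 < ab" "ab \<le> a0" "ab \<le> 1" using ab0 lt N pow by linarith+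
    show "\<beta> ^ nat \<lceil>log \<beta> ab\<rceil> < ab" using m lt(1) by simp
    show "\<beta> * ab \<le> \<beta> ^ nat \<lceil>log \<beta> ab\<rceil>" using m lt(2) \<beta> by simp
  qed
qed

lemma Least_power_le:
  fixes \<beta> :: real
  assumes "P (\<beta> ^ m)" "0 < \<beta>" "\<beta> \<le> 1"
  shows "(LEAST m. P (\<beta> ^ m)) \<le> m" "\<beta> ^ m \<le> \<beta> ^ (LEAST m. P (\<beta> ^ m))"
proof -
  show L: "(LEAST m. P (\<beta> ^ m)) \<le> m" using assms(1) by (rule Least_le)
  show "\<beta> ^ m \<le> \<beta> ^ (LEAST m. P (\<beta> ^ m))" using power_decreasing[OF L, of \<beta>] assms(2,3) by simp
qed

lemma smpg_iterates_sufficient_decrease: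
  fixes u s :: "real^'r^'d \<Rightarrow> real" and gu :: "real^'r^'d \<Rightarrow> real^'r^'d"
    and Sh :: "real^'d^'d" and R :: "real^'r^'d \<Rightarrow> real^'r^'d \<Rightarrow> real^'r^'d"
    and X V :: "nat \<Rightarrow> real^'r^'d" and \<mu> \<alpha> :: "nat \<Rightarrow> real"
  assumes u_grad: "\<forall>Y. (u has_derivative (\<lambda>H. gu Y \<bullet> H)) (at Y)"
    and u_lip: "\<forall>Y Z. norm (gu Y - gu Z) \<le> Lu * norm (Y - Z)"
    and s_conv: "convex_on UNIV s"
    and s_lip: "\<forall>Y Z. \<bar>s Y - s Z\<bar> \<le> Ls * norm (Y - Z)"
    and \<rho>: "0 < \<rho>" and retr: "retraction R"
    and X0: "X 0 \<in> stiefel" and \<mu>0: "0 < \<mu> 0" and \<theta>: "0 < \<theta>" "\<theta> < 1"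
    and sub: "\<forall>k. (\<forall>j<k. \<not> stop j) \<longrightarrow> V k \<in> tangent (X k) \<and>
       (\<forall>W \<in> tangent (X k). subobj u s \<rho> Sh (X k) (\<mu> k) (V k) \<le> subobj u s \<rho> Sh (X k) (\<mu> k) W)"
    and update: "\<forall>k. (\<forall>j\<le>k. \<not> stop j) \<longrightarrow> X (Suc k) = R (X k) (\<alpha> k *\<^sub>R V k) \<and>
       \<mu> (Suc k) = (if norm (V k) > (\<mu> k)\<^sup>2 then \<mu> k else \<theta> * \<mu> k)"
  obtains ab where "0 < ab"
    "\<And>k a. \<forall>j<k. \<not> stop j \<Longrightarrow> 0 < a \<Longrightarrow> a \<le> ab \<Longrightarrow>
       a / (2 * \<mu> k) * (norm (V k))\<^sup>2
         \<le> fsm u s \<rho> Sh (X k) (\<mu> k) - fsm u s \<rho> Sh (R (X k) (a *\<^sub>R V k)) (\<mu> k)"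
proof -
  obtain ab where ab: "0 < ab" and decrease: "\<And>Y D \<nu> a. Y \<in> stiefel \<Longrightarrow> D \<in> tangent Y \<Longrightarrow>
      \<forall>W \<in> tangent Y. subobj u s \<rho> Sh Y \<nu> D \<le> subobj u s \<rho> Sh Y \<nu> W \<Longrightarrow>
      0 < \<nu> \<Longrightarrow> \<nu> \<le> \<mu> 0 \<Longrightarrow> 0 < a \<Longrightarrow> a \<le> ab \<Longrightarrow>
      a / (2*\<nu>) * (norm D)\<^sup>2 \<le> fsm u s \<rho> Sh Y \<nu> - fsm u s \<rho> Sh (R Y (a *\<^sub>R D)) \<nu>"
    by (rule smpg_uniform_sufficient_decrease[OF u_grad u_lip s_conv s_lip \<rho> retr \<mu>0], rule that)
  show ?thesis
  proof (rule that[OF ab decrease])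
    fix k assume H: "\<forall>j<k. \<not> stop j"
    have "X k \<in> stiefel \<and> 0 < \<mu> k \<and> \<mu> k \<le> \<mu> 0"
    proof (rule smpg_iterates_feasible[where X=X and \<mu>=\<mu> and V=V and \<alpha>=\<alpha> and stop=stop,
          OF retr X0 \<mu>0 \<theta> _ _ H])
      show "V k \<in> tangent (X k)" if "\<forall>j<k. \<not> stop j" for k using sub that by blast
      show "X (Suc k) = R (X k) (\<alpha> k *\<^sub>R V k) \<and>
          \<mu> (Suc k) = (if norm (V k) > (\<mu> k)\<^sup>2 then \<mu> k else \<theta> * \<mu> k)"
        if "\<forall>j\<le>k. \<not> stop j" for k using update that by blast
    qed
    thus "X k \<in> stiefel" "0 < \<mu> k" "\<mu> k \<le> \<mu> 0" by auto
    show "V k \<in> tangent (X k)"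
      "\<forall>W \<in> tangent (X k). subobj u s \<rho> Sh (X k) (\<mu> k) (V k) \<le> subobj u s \<rho> Sh (X k) (\<mu> k) W"
      using sub H by blast+
  qed
qed

theorem mainTheorem10:
  fixes u s :: "real^'r^'d \<Rightarrow> real" and gu :: "real^'r^'d \<Rightarrow> real^'r^'d"
    and Lu Ls \<rho> \<mu>bar \<theta> \<beta> :: real and Sigma Sh :: "real^'d^'d"
    and R :: "real^'r^'d \<Rightarrow> real^'r^'d \<Rightarrow> real^'r^'d"
    and X V :: "nat \<Rightarrow> real^'r^'d" and \<mu> \<alpha> :: "nat \<Rightarrow> real"
  assumes dim: "CARD('r) < CARD('d)"
    and u_grad: "\<forall>Y. (u has_derivative (\<lambda>H. gu Y \<bullet> H)) (at Y)"
    and u_lip: "\<forall>Y Z. norm (gu Y - gu Z) \<le> Lu * norm (Y - Z)"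
    and s_conv: "convex_on UNIV s"
    and s_lip: "\<forall>Y Z. \<bar>s Y - s Z\<bar> \<le> Ls * norm (Y - Z)"
    and Sigma_psd: "psd Sigma"
    and Sh_sqrt: "psd Sh" "Sh ** Sh = Sigma"
    and rho_pos: "\<rho> > 0"
    and retr: "retraction R"
    and X0: "X 0 \<in> stiefel"
    and mu0: "\<mu> 0 > 0" and mubar: "0 \<le> \<mu>bar" "\<mu>bar \<le> \<mu> 0"
    and theta: "0 < \<theta>" "\<theta> < 1"
    and beta: "0 < \<beta>" "\<beta> < 1"
    and sub: "\<forall>k. (\<forall>j<k. \<not> smpg_stop \<mu>bar (V j) (\<mu> j)) \<longrightarrow>
                 V k \<in> tangent (X k) \<and>
                 (\<forall>W \<in> tangent (X k). subobj u s \<rho> Sh (X k) (\<mu> k) (V k) \<le> subobj u s \<rho> Sh (X k) (\<mu> k) W)"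
    and step: "\<forall>k. (\<forall>j\<le>k. \<not> smpg_stop \<mu>bar (V j) (\<mu> j)) \<longrightarrow>
                 \<alpha> k = \<beta> ^ (LEAST m. armijo u s \<rho> Sh R (X k) (V k) (\<mu> k) (\<beta> ^ m)) \<and>
                 X (Suc k) = R (X k) (\<alpha> k *\<^sub>R V k) \<and>
                 \<mu> (Suc k) = (if norm (V k) > (\<mu> k)\<^sup>2 then \<mu> k else \<theta> * \<mu> k)"
  shows "\<exists>ab. 0 < ab \<and> ab \<le> 1 \<and>
           (\<forall>k. (\<forall>j<k. \<not> smpg_stop \<mu>bar (V j) (\<mu> j)) \<longrightarrow>
              (\<forall>a. 0 < a \<and> a < ab \<longrightarrow>
                 fsm u s \<rho> Sh (X k) (\<mu> k) - fsm u s \<rho> Sh (R (X k) (a *\<^sub>R V k)) (\<mu> k)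
                   \<ge> a / (2 * \<mu> k) * (norm (V k))\<^sup>2)) \<and>
           (\<forall>k. (\<forall>j\<le>k. \<not> smpg_stop \<mu>bar (V j) (\<mu> j)) \<longrightarrow>
              (\<exists>m. armijo u s \<rho> Sh R (X k) (V k) (\<mu> k) (\<beta> ^ m)) \<and>
              (LEAST m. armijo u s \<rho> Sh R (X k) (V k) (\<mu> k) (\<beta> ^ m)) \<le> nat \<lceil>log \<beta> ab\<rceil> \<and>
              \<alpha> k \<ge> \<beta> * ab)"
proof -
  obtain ab0 where ab0: "0 < ab0" and descent: "\<And>k a. \<forall>j<k. \<not> smpg_stop \<mu>bar (V j) (\<mu> j) \<Longrightarrow>
      0 < a \<Longrightarrow> a \<le> ab0 \<Longrightarrow> a / (2 * \<mu> k) * (norm (V k))\<^sup>2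
        \<le> fsm u s \<rho> Sh (X k) (\<mu> k) - fsm u s \<rho> Sh (R (X k) (a *\<^sub>R V k)) (\<mu> k)"
    using smpg_iterates_sufficient_decrease[OF u_grad u_lip s_conv s_lip rho_pos retr X0 mu0 theta sub]
      step by blast
  obtain ab where ab: "0 < ab" "ab \<le> ab0" "ab \<le> 1"
    and trial: "\<beta> ^ nat \<lceil>log \<beta> ab\<rceil> < ab" "\<beta> * ab \<le> \<beta> ^ nat \<lceil>log \<beta> ab\<rceil>"
    by (rule exists_step_between_powers[OF beta ab0], rule that)
  show ?thesis
  proof (intro exI[of _ ab] conjI allI impI)
    fix k assume H: "\<forall>j\<le>k. \<not> smpg_stop \<mu>bar (V j) (\<mu> j)"
    let ?P = "armijo u s \<rho> Sh R (X k) (V k) (\<mu> k)"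
    have arm: "?P (\<beta> ^ nat \<lceil>log \<beta> ab\<rceil>)"
      using descent[of k "\<beta> ^ nat \<lceil>log \<beta> ab\<rceil>"] H trial(1) ab(2) beta(1) unfolding armijo_def by simp
    then show "\<exists>m. ?P (\<beta> ^ m)" by blast
    show "(LEAST m. ?P (\<beta> ^ m)) \<le> nat \<lceil>log \<beta> ab\<rceil>"
      using Least_power_le(1)[where P="?P", OF arm] beta by simp
    have "\<alpha> k = \<beta> ^ (LEAST m. ?P (\<beta> ^ m))" using step H by blast
    thus "\<beta> * ab \<le> \<alpha> k" using Least_power_le(2)[where P="?P", OF arm] beta trial(2) by linarith
  qed (use ab descent in auto)
qed

end
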